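(* Let $(\bar x,\bar f)\in W$ and let $\bar t=(\bar t_1,\dots,\bar t_d)$ with $\bar f\in\bar H=\prod_{i=1}^d[a_{i\tau(i,\bar t_i-1)},a_{i\tau(i,\bar t_i)}]$. For $i\in[d]$ define $\bar u_i,\hat u_i,u^*_i\in(\mathbb{R}\cup\{-\infty\})^{n+1}$ by $\bar u_{in}=\bar f_i$, $\bar u_{ij}=u_{ij}(\bar x)$ for $j<n$; $\hat u_{ij}=a_{ij}$ for $j\le\tau(i,\bar t_i-1)$, $\hat u_{ij}=\bar f_i$ for $j\ge\tau(i,\bar t_i)$, $\hat u_{ij}=-\infty$ otherwise; and $u^*_i=\bar u_i\vee\hat u_i$ (componentwise maximum). Define $\bar s_{ij}=\operatorname{conc}(\xi_{i,a_i})(a_{ij};\bar u_i)$, $\hat s_{ij}=\operatorname{conc}(\xi_{i,a_i})(a_{ij};\hat u_i)$, $s^*_{ij}=\operatorname{conc}(\xi_{i,a_i})(a_{ij};u^*_i)$. Then $\varphi(\bar x,\bar f)=\operatorname{conc}_Q(\bar\phi)(\bar s)$, $\varphi_{\mathcal{H}-}(\bar x,\bar f)=\operatorname{conc}_Q(\bar\phi)(\hat s)$, and $\varphi_{\mathcal{H}}(\bar x,\bar f)=\operatorname{conc}_Q(\bar\phi)(s^* )$.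
   Context: Setting: $d,n\ge1$, $[k]=\{1,\dots,k\}$; $a\in\mathbb{R}^{d\times(n+1)}$ with $a_{i0}<\dots<a_{in}$; integers $0=\tau(i,0)<\dots<\tau(i,l_i)=n$. $X\subseteq\mathbb{R}^m$, $f:X\to\mathbb{R}^d$ with $a_{i0}\le f_i(x)\le a_{in}$; $\phi:\mathbb{R}^d\to\mathbb{R}$; $u:X\to\mathbb{R}^{d\times(n+1)}$ convex with $u_{i0}(x)=a_{i0}$, $u_{in}(x)=f_i(x)$, $u_{ij}(x)\le\min\{f_i(x),a_{ij}\}$ for $j\in[n-1]$; $W$ a convex set containing $\{(x,f(x))\mid x\in X\}$. $v_{ij}\in\mathbb{R}^{n+1}$ has $k$-th component $a_{i,\min\{k,j\}}$; $Q_i=\operatorname{conv}\{v_{i0},\dots,v_{in}\}$, $Q=\prod_iQ_i$; $\bar\phi(s)=\phi(s_{1n},\dots,s_{dn})$; $\operatorname{conc}_Q(\bar\phi)$ is its concave envelope over $Q$ (taken as $-\infty$ outside $Q$). $\Delta_i=\{z_i\mid1=z_{i0}\ge\dots\ge z_{in}\ge0\}$; (Inc-1): $z_i\in\Delta_i$, $\delta_{it}\in\{0,1\}$, $z_{i\tau(i,t)}\ge\delta_{it}\ge z_{i\tau(i,t)+1}$; $Z(s)_{i0}=1$, $Z(s)_{ij}=(s_{ij}-s_{i,j-1})/(a_{ij}-a_{i,j-1})$. For $(x,s_{\cdot n})$ with $s_{\cdot n}=(s_{1n},\dots,s_{dn})$, the maxima below are over $s\in\mathbb{R}^{d\times(n+1)}$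 with the given last components and over $\delta$: $\varphi(x,s_{\cdot n})=\max\{\operatorname{conc}_Q(\bar\phi)(s)\mid u(x)\le s,(x,s_{\cdot n})\in W\}$; $\varphi_{\mathcal{H}-}(x,s_{\cdot n})=\max\{\operatorname{conc}_Q(\bar\phi)(s)\mid(Z(s),\delta)\text{ satisfies (Inc-1)},(x,s_{\cdot n})\in W\}$; $\varphi_{\mathcal{H}}(x,s_{\cdot n})=\max\{\operatorname{conc}_Q(\bar\phi)(s)\mid(Z(s),\delta)\text{ satisfies (Inc-1)},u(x)\le s,(x,s_{\cdot n})\in W\}$. For $u_i\in(\mathbb{R}\cup\{-\infty\})^{n+1}$, $\xi_{i,a_i}(\cdot;u_i):[a_{i0},a_{in}]\to\mathbb{R}\cup\{-\infty\}$ equals $u_{ij}$ at $a=a_{ij}$ ($j=0,\dots,n$) and $-\infty$ elsewhere; $\operatorname{conc}(\xi_{i,a_i})(\cdot;u_i)$ is its concave envelope over $[a_{i0},a_{in}]$. *)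

theory Defs
  imports "HOL-Analysis.Analysis"
begin

text \<open>Matrices in R^(d x (n+1)) are represented as functions s :: 'd => nat => real,
  row index i :: 'd (a finite type, so d = CARD('d) >= 1), column index j in {0..n};
  entries with column index > n are required to be 0.\<close>

definition is_mat :: "nat \<Rightarrow> ('d \<Rightarrow> nat \<Rightarrow> real) \<Rightarrow> bool" where
  "is_mat n s \<longleftrightarrow> (\<forall>i k. n < k \<longrightarrow> s i k = 0)"

definition vvec :: "('d \<Rightarrow> nat \<Rightarrow> real) \<Rightarrow> nat \<Rightarrow> 'd \<Rightarrow> nat \<Rightarrow> nat \<Rightarrow> real" where
  "vvec a n i j k = (if k \<le> n then a i (min k j) else 0)"

definition Qset :: "('d \<Rightarrow> nat \<Rightarrow> real) \<Rightarrow> nat \<Rightarrow> ('d \<Rightarrow> nat \<Rightarrow> real) set" where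
  "Qset a n = {s. \<forall>i. \<exists>\<mu>::nat \<Rightarrow> real. (\<forall>j\<le>n. 0 \<le> \<mu> j) \<and> (\<Sum>j\<le>n. \<mu> j) = 1 \<and>
                   s i = (\<lambda>k. \<Sum>j\<le>n. \<mu> j * vvec a n i j k)}"

text \<open>Concave envelope over a set S of matrices of a real-valued function g
  (supremum over finite convex combinations; -infinity outside conv S).\<close>
definition conc_mat :: "('d \<Rightarrow> nat \<Rightarrow> real) set \<Rightarrow> (('d \<Rightarrow> nat \<Rightarrow> real) \<Rightarrow> real)
    \<Rightarrow> ('d \<Rightarrow> nat \<Rightarrow> real) \<Rightarrow> ereal" where
  "conc_mat S g s = Sup {ereal (\<Sum>k\<in>K. c k * g (y k)) | (K::nat set) c y.
      finite K \<and> (\<forall>k\<in>K. 0 \<le> c k \<and> y k \<in> S) \<and> sum c K = 1 \<and>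
      (\<lambda>i j. \<Sum>k\<in>K. c k * y k i j) = s}"

definition conc_line :: "real set \<Rightarrow> (real \<Rightarrow> ereal) \<Rightarrow> real \<Rightarrow> ereal" where
  "conc_line S g x = Sup {(\<Sum>k\<in>K. ereal (c k) * g (y k)) | (K::nat set) c y.
      finite K \<and> (\<forall>k\<in>K. 0 \<le> c k \<and> y k \<in> S) \<and> sum c K = 1 \<and>
      (\<Sum>k\<in>K. c k * y k) = x}"

definition phibar :: "(real^'d \<Rightarrow> real) \<Rightarrow> nat \<Rightarrow> ('d \<Rightarrow> nat \<Rightarrow> real) \<Rightarrow> real" where
  "phibar \<phi> n s = \<phi> (\<chi> i. s i n)"

definition concQ :: "('d \<Rightarrow> nat \<Rightarrow> real) \<Rightarrow> nat \<Rightarrow> (real^'d \<Rightarrow> real)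
    \<Rightarrow> ('d \<Rightarrow> nat \<Rightarrow> real) \<Rightarrow> ereal" where
  "concQ a n \<phi> = conc_mat (Qset a n) (phibar \<phi> n)"

definition xi :: "(nat \<Rightarrow> real) \<Rightarrow> nat \<Rightarrow> (nat \<Rightarrow> ereal) \<Rightarrow> real \<Rightarrow> ereal" where
  "xi ai n ui b = (if \<exists>j\<le>n. ai j = b then ui (THE j. j \<le> n \<and> ai j = b) else -\<infinity>)"

definition conc_xi :: "(nat \<Rightarrow> real) \<Rightarrow> nat \<Rightarrow> (nat \<Rightarrow> ereal) \<Rightarrow> real \<Rightarrow> ereal" where
  "conc_xi ai n ui = conc_line {ai 0 .. ai n} (xi ai n ui)"

definition Zmap :: "('d \<Rightarrow> nat \<Rightarrow> real) \<Rightarrow> ('d \<Rightarrow> nat \<Rightarrow> real) \<Rightarrow> 'd \<Rightarrow> nat \<Rightarrow> real" where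
  "Zmap a s i j = (if j = 0 then 1 else (s i j - s i (j - 1)) / (a i j - a i (j - 1)))"

definition Inc1 :: "('d \<Rightarrow> nat \<Rightarrow> nat) \<Rightarrow> ('d \<Rightarrow> nat) \<Rightarrow> nat
    \<Rightarrow> ('d \<Rightarrow> nat \<Rightarrow> real) \<Rightarrow> ('d \<Rightarrow> nat \<Rightarrow> real) \<Rightarrow> bool" where
  "Inc1 \<tau> l n z \<delta> \<longleftrightarrow> (\<forall>i.
      z i 0 = 1 \<and> (\<forall>j<n. z i (Suc j) \<le> z i j) \<and> 0 \<le> z i n \<and>
      (\<forall>t\<in>{1..<l i}. \<delta> i t \<in> {0, 1} \<and> z i (\<tau> i t + 1) \<le> \<delta> i t \<and> \<delta> i t \<le> z i (\<tau> i t)))"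

text \<open>The three value functions (max read as supremum in the extended reals).
  s ranges over d x (n+1) matrices with last column s_{.n} = fn.\<close>
definition varphi :: "('d \<Rightarrow> nat \<Rightarrow> real) \<Rightarrow> nat \<Rightarrow> (real^'d \<Rightarrow> real)
    \<Rightarrow> ('x \<Rightarrow> 'd \<Rightarrow> nat \<Rightarrow> real) \<Rightarrow> ('x \<times> (real^'d)) set \<Rightarrow> 'x \<Rightarrow> real^'d \<Rightarrow> ereal" where
  "varphi a n \<phi> u W x fn = Sup {concQ a n \<phi> s | s. is_mat n s \<and> (\<forall>i. s i n = fn $ i) \<and>
      (\<forall>i j. j < n \<longrightarrow> u x i j \<le> s i j) \<and> (x, fn) \<in> W}"

definition varphi_Hm :: "('d \<Rightarrow> nat \<Rightarrow> real) \<Rightarrow> nat \<Rightarrow> ('d \<Rightarrow> nat \<Rightarrow> nat) \<Rightarrow> ('d \<Rightarrow> nat)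
    \<Rightarrow> (real^'d \<Rightarrow> real) \<Rightarrow> ('x \<times> (real^'d)) set \<Rightarrow> 'x \<Rightarrow> real^'d \<Rightarrow> ereal" where
  "varphi_Hm a n \<tau> l \<phi> W x fn = Sup {concQ a n \<phi> s | s. is_mat n s \<and> (\<forall>i. s i n = fn $ i) \<and>
      (\<exists>\<delta>. Inc1 \<tau> l n (Zmap a s) \<delta>) \<and> (x, fn) \<in> W}"

definition varphi_H :: "('d \<Rightarrow> nat \<Rightarrow> real) \<Rightarrow> nat \<Rightarrow> ('d \<Rightarrow> nat \<Rightarrow> nat) \<Rightarrow> ('d \<Rightarrow> nat)
    \<Rightarrow> (real^'d \<Rightarrow> real) \<Rightarrow> ('x \<Rightarrow> 'd \<Rightarrow> nat \<Rightarrow> real) \<Rightarrow> ('x \<times> (real^'d)) set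
    \<Rightarrow> 'x \<Rightarrow> real^'d \<Rightarrow> ereal" where
  "varphi_H a n \<tau> l \<phi> u W x fn = Sup {concQ a n \<phi> s | s. is_mat n s \<and> (\<forall>i. s i n = fn $ i) \<and>
      (\<exists>\<delta>. Inc1 \<tau> l n (Zmap a s) \<delta>) \<and> (\<forall>i j. j < n \<longrightarrow> u x i j \<le> s i j) \<and> (x, fn) \<in> W}"

definition env_mat :: "('d \<Rightarrow> nat \<Rightarrow> real) \<Rightarrow> nat \<Rightarrow> ('d \<Rightarrow> nat \<Rightarrow> ereal) \<Rightarrow> 'd \<Rightarrow> nat \<Rightarrow> real" where
  "env_mat a n U i j = (if j \<le> n then real_of_ereal (conc_xi (a i) n (U i) (a i j)) else 0)"

end

theory Submission
  imports Defs
begin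

text \<open>
  Since v_ij has entries min (a_ik) (a_ij), a row of a point of Q is the vector of
  values at the breakpoints of x \<mapsto> E min(x, a_iJ) for a random breakpoint index J, and its
  slopes Z are the tail probabilities of J. Because phibar only reads the last column, concQ is
  antitone on points of Q with a common last column: if s \<le> s', the law of J for s is a
  mean-preserving spread of the law for s' (convex order on a finite grid), and a martingale
  kernel realising the spread (Strassen) transports every convex decomposition of s' into one of s
  with the same last columns. Within Q and for the fixed last column, each of the three constraint
  sets consists exactly of the points lying above a lower bound U (the bar, hat and max bounds); for
  (Inc-1) this is because \<delta>_it \<in> {0, 1} forces the row to agree with a_i up to \<tau>(i,t) or to be
  constant from \<tau>(i,t) on. The least point of Q above U is the rowwise concave envelope of
  \<xi>(.; U) at the breakpoints, so every supremum is attained there.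
\<close>

section \<open>Distributions on a grid and the rows of Q\<close>

definition is_prob_vec :: "nat \<Rightarrow> (nat \<Rightarrow> real) \<Rightarrow> bool" where
  "is_prob_vec n \<mu> \<longleftrightarrow> (\<forall>j\<le>n. 0 \<le> \<mu> j) \<and> (\<Sum>j\<le>n. \<mu> j) = 1"

definition expected_min :: "(nat \<Rightarrow> real) \<Rightarrow> nat \<Rightarrow> (nat \<Rightarrow> real) \<Rightarrow> real \<Rightarrow> real" where
  "expected_min b n \<mu> x = (\<Sum>j\<le>n. \<mu> j * min x (b j))"

definition tail_mass :: "nat \<Rightarrow> (nat \<Rightarrow> real) \<Rightarrow> nat \<Rightarrow> real" where
  "tail_mass n \<mu> k = (\<Sum>j=k..n. \<mu> j)"

definition row_of_distr :: "(nat \<Rightarrow> real) \<Rightarrow> nat \<Rightarrow> (nat \<Rightarrow> real) \<Rightarrow> (nat \<Rightarrow> real) \<Rightarrow> bool" where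
  "row_of_distr b n \<mu> t \<longleftrightarrow> is_prob_vec n \<mu> \<and> (\<forall>k\<le>n. t k = expected_min b n \<mu> (b k))"

definition grid_slope :: "(nat \<Rightarrow> real) \<Rightarrow> (nat \<Rightarrow> real) \<Rightarrow> nat \<Rightarrow> real" where
  "grid_slope b t j = (if j = 0 then 1 else (t j - t (j - 1)) / (b j - b (j - 1)))"

lemma strict_mono_on_atMost_SucI:
  fixes b :: "nat \<Rightarrow> 'a::order"
  assumes "\<And>j. j < n \<Longrightarrow> b j < b (Suc j)"
  shows "strict_mono_on {..n} b"
proof (rule strict_mono_onI)
  fix r s assume "r \<in> {..n}" "s \<in> {..n}" "r < s"
  then show "b r < b s"
  proof (induction s)
    case (Suc s)
    have "b s < b (Suc s)" using assms Suc.prems by simp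
    then show ?case using Suc by (cases "r = s") (auto intro: less_trans)
  qed simp
qed

lemma prob_vec_sum_cmult: "is_prob_vec n \<mu> \<Longrightarrow> (\<Sum>j\<le>n. \<mu> j * x) = x"
  by (simp add: is_prob_vec_def flip: sum_distrib_right)

lemma expected_min_eq_self:
  assumes "is_prob_vec n \<mu>" "\<And>j. j \<le> n \<Longrightarrow> \<mu> j \<noteq> 0 \<Longrightarrow> x \<le> b j"
  shows "expected_min b n \<mu> x = x"
proof -
  have "expected_min b n \<mu> x = (\<Sum>j\<le>n. \<mu> j * x)"
    unfolding expected_min_def using assms(2) by (intro sum.cong refl) (fastforce simp: min_def)
  then show ?thesis using prob_vec_sum_cmult[OF assms(1)] by simp
qed

lemma expected_min_eq_mean:
  assumes "\<And>j. j \<le> n \<Longrightarrow> \<mu> j \<noteq> 0 \<Longrightarrow> b j \<le> x"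
  shows "expected_min b n \<mu> x = (\<Sum>j\<le>n. \<mu> j * b j)"
  unfolding expected_min_def using assms by (intro sum.cong refl) (fastforce simp: min_def)

lemma expected_min_bottom:
  assumes "is_prob_vec n \<mu>" "strict_mono_on {..n} b"
  shows "expected_min b n \<mu> (b 0) = b 0"
  using assms by (intro expected_min_eq_self) (auto intro: strict_mono_on_leD)

lemma expected_min_top:
  assumes "strict_mono_on {..n} b"
  shows "expected_min b n \<mu> (b n) = (\<Sum>j\<le>n. \<mu> j * b j)"
  using assms by (intro expected_min_eq_mean) (auto intro: strict_mono_on_leD)

lemma expected_min_le:
  assumes "is_prob_vec n \<mu>"
  shows "expected_min b n \<mu> x \<le> x"
proof -
  have "expected_min b n \<mu> x \<le> (\<Sum>j\<le>n. \<mu> j * x)"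
    unfolding expected_min_def using assms by (intro sum_mono mult_left_mono) (auto simp: is_prob_vec_def)
  then show ?thesis by (simp add: prob_vec_sum_cmult[OF assms])
qed

lemma expected_min_mono:
  "is_prob_vec n \<mu> \<Longrightarrow> x \<le> y \<Longrightarrow> expected_min b n \<mu> x \<le> expected_min b n \<mu> y"
  unfolding expected_min_def is_prob_vec_def by (intro sum_mono mult_left_mono) auto

lemma expected_min_diff_le:
  assumes "is_prob_vec n \<mu>" "x \<le> y"
  shows "expected_min b n \<mu> y - expected_min b n \<mu> x \<le> y - x"
proof -
  have "expected_min b n \<mu> y - expected_min b n \<mu> x = (\<Sum>j\<le>n. \<mu> j * (min y (b j) - min x (b j)))"
    unfolding expected_min_def by (simp add: sum_subtractf right_diff_distrib)
  also have "\<dots> \<le> (\<Sum>j\<le>n. \<mu> j * (y - x))"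
    using assms by (intro sum_mono mult_left_mono) (auto simp: is_prob_vec_def)
  finally show ?thesis by (simp add: prob_vec_sum_cmult[OF assms(1)])
qed

lemma concave_on_expected_min:
  assumes "is_prob_vec n \<mu>" "convex S"
  shows "concave_on S (expected_min b n \<mu>)"
  unfolding concave_on_iff
proof (intro conjI ballI allI impI)
  show "convex S" by fact
next
  fix x y u v :: real assume uv: "0 \<le> u" "0 \<le> v" "u + v = 1"
  have "u * min x c + v * min y c \<le> min (u * x + v * y) c" for c
  proof -
    have "u * min x c \<le> u * x" "v * min y c \<le> v * y" "u * min x c \<le> u * c" "v * min y c \<le> v * c"
      using uv by (auto intro: mult_left_mono)
    moreover have "u * c + v * c = c" using uv by (simp flip: distrib_right)
    ultimately show ?thesis by simp
  qed
  then have "(\<Sum>j\<le>n. \<mu> j * (u * min x (b j) + v * min y (b j))) \<le> expected_min b n \<mu> (u * x + v * y)"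
    unfolding expected_min_def using assms by (intro sum_mono mult_left_mono) (auto simp: is_prob_vec_def)
  then show "u * expected_min b n \<mu> x + v * expected_min b n \<mu> y \<le> expected_min b n \<mu> (u *\<^sub>R x + v *\<^sub>R y)"
    by (simp add: expected_min_def sum_distrib_left sum.distrib algebra_simps)
qed

lemma expected_min_mixture:
  "expected_min b n (\<lambda>m. \<Sum>k\<in>K. c k * \<nu> k m) x = (\<Sum>k\<in>K. c k * expected_min b n (\<nu> k) x)"
  unfolding expected_min_def sum_distrib_left sum_distrib_right by (subst sum.swap) (simp add: mult.assoc)

lemma expected_min_cong: "(\<And>m. m \<le> n \<Longrightarrow> \<mu> m = \<nu> m) \<Longrightarrow> expected_min b n \<mu> x = expected_min b n \<nu> x"
  unfolding expected_min_def by (intro sum.cong) auto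

lemma expected_min_step:
  assumes b: "strict_mono_on {..n} b" and k: "k < n"
  shows "expected_min b n \<mu> (b (Suc k)) - expected_min b n \<mu> (b k) = tail_mass n \<mu> (Suc k) * (b (Suc k) - b k)"
proof -
  have "\<mu> j * (min (b (Suc k)) (b j) - min (b k) (b j))
      = (if j \<in> {Suc k..n} then \<mu> j * (b (Suc k) - b k) else 0)" if "j \<le> n" for j
  proof (cases "Suc k \<le> j")
    case True
    then have "b (Suc k) \<le> b j" "b k \<le> b j" using strict_mono_on_leD[OF b] that k by auto
    then show ?thesis using True that by (simp add: min_def)
  next
    case False
    then have "b j \<le> b k" "b j \<le> b (Suc k)" using strict_mono_on_leD[OF b] that k by auto
    then show ?thesis using False by (simp add: min_def)
  qed
  then have "expected_min b n \<mu> (b (Suc k)) - expected_min b n \<mu> (b k)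
      = (\<Sum>j\<le>n. if j \<in> {Suc k..n} then \<mu> j * (b (Suc k) - b k) else 0)"
    unfolding expected_min_def sum_subtractf[symmetric] right_diff_distrib[symmetric]
    by (intro sum.cong) auto
  also have "\<dots> = (\<Sum>j=Suc k..n. \<mu> j * (b (Suc k) - b k))"
    by (subst sum.inter_restrict[symmetric]) (simp_all add: Int_absorb1 subset_eq)
  finally show ?thesis by (simp add: tail_mass_def sum_distrib_right)
qed

lemma tail_mass_Suc: "k \<le> n \<Longrightarrow> tail_mass n \<mu> k = \<mu> k + tail_mass n \<mu> (Suc k)"
  unfolding tail_mass_def by (simp add: sum.atLeast_Suc_atMost)

lemma tail_mass_0: "is_prob_vec n \<mu> \<Longrightarrow> tail_mass n \<mu> 0 = 1"
  unfolding tail_mass_def is_prob_vec_def by (simp add: atLeast0AtMost)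

lemma tail_mass_nonneg: "is_prob_vec n \<mu> \<Longrightarrow> 0 \<le> tail_mass n \<mu> k"
  unfolding tail_mass_def is_prob_vec_def by (auto intro: sum_nonneg)

lemma tail_mass_antimono: "is_prob_vec n \<mu> \<Longrightarrow> j \<le> k \<Longrightarrow> tail_mass n \<mu> k \<le> tail_mass n \<mu> j"
  unfolding tail_mass_def is_prob_vec_def by (intro sum_mono2) auto

lemma tail_mass_le_1: "is_prob_vec n \<mu> \<Longrightarrow> tail_mass n \<mu> k \<le> 1"
  using tail_mass_antimono[of n \<mu> 0 k] tail_mass_0 by auto

lemma tail_mass_ge_1_imp_zero:
  assumes "is_prob_vec n \<mu>" "1 \<le> tail_mass n \<mu> p" "m < p" "m \<le> n"
  shows "\<mu> m = 0"
proof -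
  have "(\<Sum>j\<le>n. \<mu> j) = (\<Sum>j\<in>{..n} - {p..n}. \<mu> j) + tail_mass n \<mu> p"
    unfolding tail_mass_def by (subst sum.subset_diff[of "{p..n}"]) auto
  then have "(\<Sum>j\<in>{..n} - {p..n}. \<mu> j) = 0"
    using assms(1,2) sum_nonneg[of "{..n} - {p..n}" \<mu>] by (auto simp: is_prob_vec_def)
  moreover have "m \<in> {..n} - {p..n}" using assms(3,4) by auto
  ultimately show ?thesis using assms(1) by (subst (asm) sum_nonneg_eq_0_iff) (auto simp: is_prob_vec_def)
qed

lemma tail_mass_le_0_imp_zero:
  assumes "is_prob_vec n \<mu>" "tail_mass n \<mu> p \<le> 0" "p \<le> m" "m \<le> n"
  shows "\<mu> m = 0"
proof -
  have "tail_mass n \<mu> p = 0" using assms(1,2) tail_mass_nonneg[OF assms(1)] by (simp add: order_antisym)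
  then show ?thesis
    using assms by (subst (asm) tail_mass_def, subst (asm) sum_nonneg_eq_0_iff) (auto simp: is_prob_vec_def)
qed

lemma grid_slope_row_of_distr:
  assumes b: "strict_mono_on {..n} b" and t: "row_of_distr b n \<mu> t" and j: "j \<le> n"
  shows "grid_slope b t j = tail_mass n \<mu> j"
proof (cases j)
  case 0
  then show ?thesis using t tail_mass_0 by (simp add: grid_slope_def row_of_distr_def)
next
  case (Suc k)
  have "b k < b (Suc k)" using strict_mono_onD[OF b] Suc j by simp
  then show ?thesis using expected_min_step[OF b, of k \<mu>] t Suc j by (simp add: grid_slope_def row_of_distr_def)
qed

lemma row_of_distr_bottom: "strict_mono_on {..n} b \<Longrightarrow> row_of_distr b n \<mu> t \<Longrightarrow> t 0 = b 0"
  using expected_min_bottom by (simp add: row_of_distr_def)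

lemma row_of_distr_le: "row_of_distr b n \<mu> t \<Longrightarrow> j \<le> n \<Longrightarrow> t j \<le> b j"
  using expected_min_le by (simp add: row_of_distr_def)

lemma row_of_distr_mono:
  assumes "strict_mono_on {..n} b" "row_of_distr b n \<mu> t" "i \<le> j" "j \<le> n"
  shows "t i \<le> t j"
  using assms expected_min_mono strict_mono_on_leD[OF assms(1), of i j] by (simp add: row_of_distr_def)

lemma row_of_distr_diff_le:
  assumes "strict_mono_on {..n} b" "row_of_distr b n \<mu> t" "i \<le> j" "j \<le> n"
  shows "t j - t i \<le> b j - b i"
  using assms expected_min_diff_le strict_mono_on_leD[OF assms(1), of i j] by (simp add: row_of_distr_def)

lemma row_of_distr_from_slopes:
  assumes b: "strict_mono_on {..n} b" and t0: "t 0 = b 0"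
    and antitone: "\<And>j. j < n \<Longrightarrow> grid_slope b t (Suc j) \<le> grid_slope b t j"
    and last: "0 \<le> grid_slope b t n"
  shows "\<exists>\<mu>. row_of_distr b n \<mu> t"
proof -
  define z where "z j = (if j \<le> n then grid_slope b t j else 0)" for j
  define \<mu> where "\<mu> j = z j - z (Suc j)" for j
  have tail: "tail_mass n \<mu> k = z k" if "k \<le> n" for k
  proof -
    have "tail_mass n \<mu> k = - (\<Sum>i = k..n. z (Suc i) - z i)"
      unfolding tail_mass_def \<mu>_def by (simp add: sum_negf[symmetric])
    also have "\<dots> = z k - z (Suc n)" using that by (subst sum_Suc_diff) auto
    finally show ?thesis by (simp add: z_def)
  qed
  have "0 \<le> \<mu> j" if "j \<le> n" for j
    using that antitone[of j] last by (cases "j = n") (auto simp: \<mu>_def z_def)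
  then have \<mu>: "is_prob_vec n \<mu>"
    using tail[of 0] by (auto simp: is_prob_vec_def tail_mass_def z_def grid_slope_def atLeast0AtMost)
  have "t k = expected_min b n \<mu> (b k)" if "k \<le> n" for k
    using that
  proof (induction k)
    case 0
    then show ?case using expected_min_bottom[OF \<mu> b] t0 by simp
  next
    case (Suc k)
    have "b k < b (Suc k)" using strict_mono_onD[OF b] Suc.prems by simp
    then show ?case
      using expected_min_step[OF b, of k \<mu>] Suc tail[of "Suc k"] by (auto simp: z_def grid_slope_def)
  qed
  then show ?thesis using \<mu> unfolding row_of_distr_def by blast
qed

lemma expected_min_grid_inject:
  assumes b: "strict_mono_on {..n} b" and \<mu>: "is_prob_vec n \<mu>" and \<nu>: "is_prob_vec n \<nu>"
    and eq: "\<And>k. k \<le> n \<Longrightarrow> expected_min b n \<mu> (b k) = expected_min b n \<nu> (b k)"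
    and m: "m \<le> n"
  shows "\<mu> m = \<nu> m"
proof -
  have "tail_mass n \<mu> k = tail_mass n \<nu> k" if "k \<le> Suc n" for k
  proof (cases k)
    case 0
    then show ?thesis using tail_mass_0 \<mu> \<nu> by simp
  next
    case (Suc k')
    show ?thesis
    proof (cases "k' < n")
      case True
      have "b k' < b (Suc k')" using strict_mono_onD[OF b] True by simp
      then show ?thesis
        using expected_min_step[OF b True, of \<mu>] expected_min_step[OF b True, of \<nu>] eq True Suc by simp
    qed (use that Suc in \<open>simp add: tail_mass_def\<close>)
  qed
  then show ?thesis using tail_mass_Suc[OF m, of \<mu>] tail_mass_Suc[OF m, of \<nu>] m by simp
qed

lemma Qset_iff:
  assumes a: "\<And>i. strict_mono_on {..n} (a i)"
  shows "s \<in> Qset a n \<longleftrightarrow> (\<forall>i. (\<exists>\<mu>. row_of_distr (a i) n \<mu> (s i)) \<and> (\<forall>k>n. s i k = 0))"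
proof -
  have v: "(\<Sum>j\<le>n. \<mu> j * vvec a n i j k) = (if k \<le> n then expected_min (a i) n \<mu> (a i k) else 0)"
    for \<mu> i k
  proof -
    have "a i (min k j) = min (a i k) (a i j)" if "k \<le> n" "j \<le> n" for j
      using strict_mono_on_leD[OF a[of i], of k j] strict_mono_on_leD[OF a[of i], of j k] that
      by (cases "k \<le> j") (auto simp: min_def)
    then show ?thesis unfolding expected_min_def vvec_def by (auto intro: sum.cong)
  qed
  have row: "(\<exists>\<mu>. (\<forall>j\<le>n. 0 \<le> \<mu> j) \<and> (\<Sum>j\<le>n. \<mu> j) = 1 \<and> s i = (\<lambda>k. \<Sum>j\<le>n. \<mu> j * vvec a n i j k))
      \<longleftrightarrow> (\<exists>\<mu>. row_of_distr (a i) n \<mu> (s i)) \<and> (\<forall>k>n. s i k = 0)" for i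
  proof -
    have "s i = (\<lambda>k. if k \<le> n then expected_min (a i) n \<mu> (a i k) else 0)
        \<longleftrightarrow> (\<forall>k\<le>n. s i k = expected_min (a i) n \<mu> (a i k)) \<and> (\<forall>k>n. s i k = 0)" for \<mu>
      unfolding fun_eq_iff by (metis not_le)
    then show ?thesis unfolding row_of_distr_def is_prob_vec_def v by blast
  qed
  show ?thesis unfolding Qset_def using row by blast
qed

section \<open>Martingale kernels and the convex order\<close>

definition transport :: "nat \<Rightarrow> (nat \<Rightarrow> real) \<Rightarrow> (nat \<Rightarrow> nat \<Rightarrow> real) \<Rightarrow> nat \<Rightarrow> real" where
  "transport n \<mu> \<pi> m = (\<Sum>j\<le>n. \<mu> j * \<pi> j m)"

definition martingale_kernel :: "(nat \<Rightarrow> real) \<Rightarrow> nat \<Rightarrow> (nat \<Rightarrow> nat \<Rightarrow> real) \<Rightarrow> bool" where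
  "martingale_kernel b n \<pi> \<longleftrightarrow> (\<forall>j\<le>n. is_prob_vec n (\<pi> j) \<and> (\<Sum>m\<le>n. \<pi> j m * b m) = b j)"

lemma sum_transport: "(\<Sum>m\<le>n. transport n \<mu> \<pi> m * g m) = (\<Sum>j\<le>n. \<mu> j * (\<Sum>m\<le>n. \<pi> j m * g m))"
  unfolding transport_def sum_distrib_right sum_distrib_left by (subst sum.swap) (simp add: mult.assoc)

lemma transport_transport: "transport n (transport n \<mu> \<pi>) \<rho> m = transport n \<mu> (\<lambda>j. transport n (\<pi> j) \<rho>) m"
  unfolding transport_def sum_distrib_left sum_distrib_right by (subst sum.swap) (simp add: mult.assoc)

lemma transport_mixture:
  "(\<Sum>k\<in>K. c k * transport n (\<nu> k) \<pi> m) = transport n (\<lambda>j. \<Sum>k\<in>K. c k * \<nu> k j) \<pi> m"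
  unfolding transport_def sum_distrib_left sum_distrib_right by (subst sum.swap) (simp add: mult.assoc)

lemma prob_vec_transport:
  assumes "is_prob_vec n \<mu>" "martingale_kernel b n \<pi>"
  shows "is_prob_vec n (transport n \<mu> \<pi>)"
proof -
  have "(\<Sum>m\<le>n. transport n \<mu> \<pi> m) = (\<Sum>j\<le>n. \<mu> j * (\<Sum>m\<le>n. \<pi> j m))"
    using sum_transport[of n \<mu> \<pi> "\<lambda>_. 1"] by simp
  also have "\<dots> = 1" using assms by (simp add: martingale_kernel_def is_prob_vec_def)
  finally show ?thesis
    using assms unfolding is_prob_vec_def martingale_kernel_def transport_def by (auto intro!: sum_nonneg)
qed

lemma expected_min_transport_top:
  assumes b: "strict_mono_on {..n} b" and \<pi>: "martingale_kernel b n \<pi>"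
  shows "expected_min b n (transport n \<mu> \<pi>) (b n) = expected_min b n \<mu> (b n)"
  using \<pi> by (simp add: expected_min_top[OF b] sum_transport martingale_kernel_def)

lemma martingale_kernel_id: "martingale_kernel b n (\<lambda>j m. of_bool (m = j))"
  by (simp add: martingale_kernel_def is_prob_vec_def)

lemma transport_id: "m \<le> n \<Longrightarrow> transport n \<mu> (\<lambda>j m. of_bool (m = j)) m = \<mu> m"
  by (simp add: transport_def)

lemma martingale_kernel_comp:
  assumes \<pi>: "martingale_kernel b n \<pi>" and \<rho>: "martingale_kernel b n \<rho>"
  shows "martingale_kernel b n (\<lambda>j. transport n (\<pi> j) \<rho>)"
  unfolding martingale_kernel_def
proof (intro allI impI conjI)
  fix j assume j: "j \<le> n"
  then show "is_prob_vec n (transport n (\<pi> j) \<rho>)"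
    using \<pi> \<rho> by (intro prob_vec_transport) (auto simp: martingale_kernel_def)
  show "(\<Sum>m\<le>n. transport n (\<pi> j) \<rho> m * b m) = b j"
    using \<pi> \<rho> j by (simp add: sum_transport martingale_kernel_def)
qed

definition interp_weight :: "(nat \<Rightarrow> real) \<Rightarrow> nat \<Rightarrow> nat \<Rightarrow> nat \<Rightarrow> real" where
  "interp_weight b p q j = (b j - b p) / (b q - b p)"

lemma interp_weight_combination:
  assumes "b p < b q"
  shows "(1 - interp_weight b p q j) * b p + interp_weight b p q j * b q = b j"
proof -
  have "interp_weight b p q j * (b q - b p) = b j - b p"
    using assms by (simp add: interp_weight_def)
  then show ?thesis by (simp add: algebra_simps)
qed

lemma interp_weight_bounds:
  assumes b: "strict_mono_on {..n} b" and "p \<le> j" "j \<le> q" "q \<le> n" "p < q"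
  shows "0 \<le> interp_weight b p q j" "interp_weight b p q j \<le> 1"
proof -
  have "b p \<le> b j" "b j \<le> b q" "b p < b q" using assms strict_mono_on_leD[OF b] strict_mono_onD[OF b] by auto
  then show "0 \<le> interp_weight b p q j" "interp_weight b p q j \<le> 1"
    unfolding interp_weight_def by (auto simp: field_simps)
qed

lemma min_interp:
  assumes b: "strict_mono_on {..n} b" and "p \<le> k" "k \<le> q" "q \<le> n" "p < q" "m \<le> n" "m \<le> p \<or> q \<le> m"
  shows "min (b k) (b m) = (1 - interp_weight b p q k) * min (b p) (b m) + interp_weight b p q k * min (b q) (b m)"
proof -
  have bpq: "b p < b q" using strict_mono_onD[OF b] assms by auto
  have bk: "b p \<le> b k" "b k \<le> b q" using strict_mono_on_leD[OF b] assms by auto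
  consider "b m \<le> b p" | "b q \<le> b m" using strict_mono_on_leD[OF b] assms by auto
  then show ?thesis
  proof cases
    case 1
    then have "min (b k) (b m) = b m" "min (b p) (b m) = b m" "min (b q) (b m) = b m" using bk by auto
    then show ?thesis by (simp add: algebra_simps)
  next
    case 2
    then show ?thesis using bk interp_weight_combination[OF bpq, of k] by (simp add: min_def)
  qed
qed

lemma expected_min_interp:
  assumes b: "strict_mono_on {..n} b" and "p \<le> k" "k \<le> q" "q \<le> n" "p < q"
    and vanish: "\<And>m. p < m \<Longrightarrow> m < q \<Longrightarrow> \<nu> m = 0"
  shows "expected_min b n \<nu> (b k)
    = (1 - interp_weight b p q k) * expected_min b n \<nu> (b p) + interp_weight b p q k * expected_min b n \<nu> (b q)"
proof -
  have "\<nu> m * min (b k) (b m)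
      = (1 - interp_weight b p q k) * (\<nu> m * min (b p) (b m)) + interp_weight b p q k * (\<nu> m * min (b q) (b m))"
    if "m \<le> n" for m
  proof (cases "m \<le> p \<or> q \<le> m")
    case True
    show ?thesis by (subst min_interp[OF b assms(2-5) that True]) (simp add: algebra_simps)
  qed (use vanish in auto)
  then show ?thesis unfolding expected_min_def by (simp add: sum.distrib sum_distrib_left)
qed

definition spread_kernel :: "(nat \<Rightarrow> real) \<Rightarrow> nat \<Rightarrow> nat \<Rightarrow> real \<Rightarrow> nat \<Rightarrow> nat \<Rightarrow> real" where
  "spread_kernel b p q \<theta> j m =
    (if p < j \<and> j < q
     then (1 - \<theta>) * of_bool (m = j)
          + \<theta> * ((1 - interp_weight b p q j) * of_bool (m = p) + interp_weight b p q j * of_bool (m = q))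
     else of_bool (m = j))"

lemma sum_spread_kernel:
  assumes "j \<le> n" "q \<le> n" "p < q"
  shows "(\<Sum>m\<le>n. spread_kernel b p q \<theta> j m * g m)
    = (if p < j \<and> j < q
       then (1 - \<theta>) * g j + \<theta> * ((1 - interp_weight b p q j) * g p + interp_weight b p q j * g q)
       else g j)"
proof (cases "p < j \<and> j < q")
  case True
  define w where "w = interp_weight b p q j"
  have "spread_kernel b p q \<theta> j m * g m = (1 - \<theta>) * (of_bool (m = j) * g m)
      + \<theta> * (1 - w) * (of_bool (m = p) * g m) + \<theta> * w * (of_bool (m = q) * g m)" for m
    using True by (simp add: spread_kernel_def w_def algebra_simps)
  then show ?thesis
    using True assms by (simp add: sum.distrib flip: sum_distrib_left) (simp add: w_def algebra_simps)
next
  case False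
  have "spread_kernel b p q \<theta> j m = of_bool (m = j)" for m
    unfolding spread_kernel_def if_not_P[OF False] ..
  then show ?thesis using assms unfolding if_not_P[OF False] by simp
qed

lemma martingale_kernel_spread:
  assumes b: "strict_mono_on {..n} b" and pq: "p < q" "q \<le> n" and \<theta>: "0 \<le> \<theta>" "\<theta> \<le> 1"
  shows "martingale_kernel b n (spread_kernel b p q \<theta>)"
  unfolding martingale_kernel_def is_prob_vec_def
proof (intro allI impI conjI)
  fix j assume j: "j \<le> n"
  have "b p < b q" using strict_mono_onD[OF b] pq by simp
  then show "(\<Sum>m\<le>n. spread_kernel b p q \<theta> j m) = 1" "(\<Sum>m\<le>n. spread_kernel b p q \<theta> j m * b m) = b j"
    using sum_spread_kernel[OF j pq(2,1), of b \<theta> "\<lambda>_. 1"] sum_spread_kernel[OF j pq(2,1), of b \<theta> b]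
      interp_weight_combination[of b p q j]
    by (simp_all add: algebra_simps)
  show "0 \<le> spread_kernel b p q \<theta> j m" if "m \<le> n" for m
    using interp_weight_bounds[OF b _ _ pq(2,1), of j] \<theta> by (auto simp: spread_kernel_def)
qed

lemma expected_min_transport_spread:
  assumes "q \<le> n" "p < q"
  shows "expected_min b n (transport n \<mu> (spread_kernel b p q \<theta>)) x
    = (1 - \<theta>) * expected_min b n \<mu> x + \<theta> * expected_min b n (transport n \<mu> (spread_kernel b p q 1)) x"
proof -
  let ?g = "\<lambda>m. min x (b m)"
  have row: "(\<Sum>m\<le>n. spread_kernel b p q \<theta> j m * ?g m)
      = (1 - \<theta>) * ?g j + \<theta> * (\<Sum>m\<le>n. spread_kernel b p q 1 j m * ?g m)" if "j \<le> n" for j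
    unfolding sum_spread_kernel[OF that assms] by (simp add: algebra_simps)
  have "expected_min b n (transport n \<mu> (spread_kernel b p q \<theta>)) x
      = (\<Sum>j\<le>n. (1 - \<theta>) * (\<mu> j * ?g j) + \<theta> * (\<mu> j * (\<Sum>m\<le>n. spread_kernel b p q 1 j m * ?g m)))"
    unfolding expected_min_def sum_transport
    by (intro sum.cong refl) (simp only: row atMost_iff, simp add: algebra_simps)
  also have "\<dots> = (1 - \<theta>) * expected_min b n \<mu> x + \<theta> * expected_min b n (transport n \<mu> (spread_kernel b p q 1)) x"
    unfolding expected_min_def sum_transport by (simp add: sum.distrib flip: sum_distrib_left)
  finally show ?thesis .
qed

lemma full_spread_bounds:
  assumes b: "strict_mono_on {..n} b" and \<mu>: "is_prob_vec n \<mu>" and pq: "p < q" "q \<le> n"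
    and eq_p: "expected_min b n \<mu> (b p) = expected_min b n \<mu>' (b p)"
    and eq_q: "expected_min b n \<mu> (b q) = expected_min b n \<mu>' (b q)"
  defines "T \<equiv> expected_min b n (transport n \<mu>' (spread_kernel b p q 1))"
  shows full_spread_outside: "\<And>k. k \<le> n \<Longrightarrow> k \<le> p \<or> q \<le> k \<Longrightarrow> T (b k) = expected_min b n \<mu>' (b k)"
    and full_spread_inside: "\<And>k. p < k \<Longrightarrow> k < q \<Longrightarrow> T (b k) \<le> expected_min b n \<mu> (b k)"
proof -
  show outside: "T (b k) = expected_min b n \<mu>' (b k)" if k: "k \<le> n" "k \<le> p \<or> q \<le> k" for k
  proof -
    have "(\<Sum>m\<le>n. spread_kernel b p q 1 j m * min (b k) (b m)) = min (b k) (b j)" if "j \<le> n" for j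
      using sum_spread_kernel[OF that pq(2,1), of b 1 "\<lambda>m. min (b k) (b m)"]
        min_interp[OF b _ _ pq(2,1) k, of j] by (auto simp: min.commute)
    then show ?thesis unfolding T_def expected_min_def sum_transport by simp
  qed
  fix k assume k: "p < k" "k < q"
  have "transport n \<mu>' (spread_kernel b p q 1) m = 0" if "p < m" "m < q" for m
    using that unfolding transport_def spread_kernel_def by (intro sum.neutral) auto
  then have "T (b k) = (1 - interp_weight b p q k) * T (b p) + interp_weight b p q k * T (b q)"
    unfolding T_def using k pq by (intro expected_min_interp[OF b]) auto
  also have "\<dots> = (1 - interp_weight b p q k) * expected_min b n \<mu> (b p) + interp_weight b p q k * expected_min b n \<mu> (b q)"
    using outside[of p] outside[of q] pq eq_p eq_q by simp
  also have "\<dots> \<le> expected_min b n \<mu> ((1 - interp_weight b p q k) *\<^sub>R b p + interp_weight b p q k *\<^sub>R b q)"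
    using interp_weight_bounds[OF b _ _ pq(2,1), of k] k
    by (intro concave_onD[OF concave_on_expected_min[OF \<mu> convex_UNIV]]) auto
  also have "\<dots> = expected_min b n \<mu> (b k)"
    using interp_weight_combination[of b p q k] strict_mono_onD[OF b, of p q] pq by simp
  finally show "T (b k) \<le> expected_min b n \<mu> (b k)" .
qed

lemma mixing_weight_touch:
  fixes f g h :: "'a \<Rightarrow> real"
  assumes I: "finite I" "I \<noteq> {}"
    and h_le: "\<And>k. k \<in> I \<Longrightarrow> h k \<le> f k" and f_less: "\<And>k. k \<in> I \<Longrightarrow> f k < g k"
  obtains \<theta> k1 where "0 \<le> \<theta>" "\<theta> \<le> 1" "k1 \<in> I" "(1 - \<theta>) * g k1 + \<theta> * h k1 = f k1"
    "\<And>k. k \<in> I \<Longrightarrow> f k \<le> (1 - \<theta>) * g k + \<theta> * h k"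
proof -
  define r where "r k = (g k - f k) / (g k - h k)" for k
  define \<theta> where "\<theta> = Min (r ` I)"
  have "\<theta> \<in> r ` I" unfolding \<theta>_def using I by (intro Min_in) auto
  then obtain k1 where k1: "k1 \<in> I" "\<theta> = r k1" by blast
  have r: "0 < r k" "r k \<le> 1" "r k * (g k - h k) = g k - f k" if "k \<in> I" for k
    using h_le[OF that] f_less[OF that] by (auto simp: r_def field_simps)
  have "f k \<le> (1 - \<theta>) * g k + \<theta> * h k" if "k \<in> I" for k
  proof -
    have "\<theta> \<le> r k" using Min_le[of "r ` I"] I that \<theta>_def by auto
    then have "\<theta> * (g k - h k) \<le> r k * (g k - h k)"
      using h_le[OF that] f_less[OF that] by (intro mult_right_mono) auto
    then show ?thesis using r(3)[OF that] by (simp add: algebra_simps)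
  qed
  moreover have "(1 - \<theta>) * g k1 + \<theta> * h k1 = f k1" using r(3)[OF k1(1)] k1(2) by (simp add: algebra_simps)
  ultimately show ?thesis using r(1,2)[OF k1(1)] k1 by (intro that[of \<theta> k1]) auto
qed

lemma enclosing_interval:
  fixes E :: "nat \<Rightarrow> bool"
  assumes "E 0" "E n" "\<not> E k" "k \<le> n"
  obtains p q where "p < k" "k < q" "q \<le> n" "E p" "E q" "\<And>j. p < j \<Longrightarrow> j < q \<Longrightarrow> \<not> E j"
proof -
  define P where "P = {j. j < k \<and> E j}"
  define Q where "Q = {j. k < j \<and> j \<le> n \<and> E j}"
  have "k \<noteq> 0" "k \<noteq> n" using assms(1-3) by metis+
  then have "0 \<in> P" "n \<in> Q" using assms by (auto simp: P_def Q_def)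
  moreover have "finite P" "finite Q"
    using finite_subset[of P "{..n}"] finite_subset[of Q "{..n}"] assms(4) by (auto simp: P_def Q_def)
  ultimately have P: "finite P" "P \<noteq> {}" and Q: "finite Q" "Q \<noteq> {}" by auto
  have p: "Max P \<in> P" and q: "Min Q \<in> Q" using Max_in[OF P] Min_in[OF Q] .
  then have "Max P < k" "E (Max P)" "k < Min Q" "Min Q \<le> n" "E (Min Q)" by (simp_all add: P_def Q_def)
  have between: "\<not> E j" if "Max P < j" "j < Min Q" for j
  proof
    assume "E j"
    consider "j < k" | "j = k" | "k < j" by linarith
    then show False
    proof cases
      case 1
      then have "j \<in> P" using \<open>E j\<close> by (simp add: P_def)
      then show False using Max_ge[OF P(1), of j] that by simp
    next
      case 3
      then have "j \<in> Q" using \<open>E j\<close> that q by (simp add: Q_def)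
      then show False using Min_le[OF Q(1), of j] that by simp
    qed (use \<open>E j\<close> assms in auto)
  qed
  show ?thesis by (rule that) fact+
qed

definition gap_points :: "(nat \<Rightarrow> real) \<Rightarrow> nat \<Rightarrow> (nat \<Rightarrow> real) \<Rightarrow> (nat \<Rightarrow> real) \<Rightarrow> nat set" where
  "gap_points b n \<mu> \<nu> = {k. k \<le> n \<and> expected_min b n \<mu> (b k) < expected_min b n \<nu> (b k)}"

lemma gap_interval:
  assumes b: "strict_mono_on {..n} b" and \<mu>: "is_prob_vec n \<mu>" and \<mu>': "is_prob_vec n \<mu>'"
    and le: "\<And>k. k \<le> n \<Longrightarrow> expected_min b n \<mu> (b k) \<le> expected_min b n \<mu>' (b k)"
    and top: "expected_min b n \<mu> (b n) = expected_min b n \<mu>' (b n)"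
    and gap: "gap_points b n \<mu> \<mu>' \<noteq> {}"
  obtains p q where "p < q" "q \<le> n" "{p<..<q} \<noteq> {}"
    "expected_min b n \<mu> (b p) = expected_min b n \<mu>' (b p)" "expected_min b n \<mu> (b q) = expected_min b n \<mu>' (b q)"
    "\<And>k. k \<in> {p<..<q} \<Longrightarrow> expected_min b n \<mu> (b k) < expected_min b n \<mu>' (b k)"
proof -
  let ?F = "expected_min b n \<mu>" and ?F' = "expected_min b n \<mu>'"
  obtain k0 where k0: "k0 \<le> n" "?F (b k0) \<noteq> ?F' (b k0)" using gap unfolding gap_points_def by auto
  have "?F (b 0) = ?F' (b 0)" using expected_min_bottom b \<mu> \<mu>' by simp
  then obtain p q where pq: "p < k0" "k0 < q" "q \<le> n" "?F (b p) = ?F' (b p)" "?F (b q) = ?F' (b q)"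
    and strict: "\<And>k. p < k \<Longrightarrow> k < q \<Longrightarrow> ?F (b k) \<noteq> ?F' (b k)"
    by (rule enclosing_interval[of "\<lambda>k. ?F (b k) = ?F' (b k)" n k0]) (use top k0 in auto)
  have "?F (b k) < ?F' (b k)" if "k \<in> {p<..<q}" for k
    using le[of k] strict[of k] that pq(3) by simp
  moreover have "p < q" "{p<..<q} \<noteq> {}" using pq by auto
  ultimately show ?thesis using that pq(3-5) by blast
qed

lemma spread_shrinks_gap:
  assumes b: "strict_mono_on {..n} b" and \<mu>: "is_prob_vec n \<mu>" and \<mu>': "is_prob_vec n \<mu>'"
    and le: "\<And>k. k \<le> n \<Longrightarrow> expected_min b n \<mu> (b k) \<le> expected_min b n \<mu>' (b k)"
    and top: "expected_min b n \<mu> (b n) = expected_min b n \<mu>' (b n)"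
    and gap: "gap_points b n \<mu> \<mu>' \<noteq> {}"
  obtains p q \<theta> where "p < q" "q \<le> n" "0 \<le> \<theta>" "\<theta> \<le> 1"
    "\<And>k. k \<le> n \<Longrightarrow> expected_min b n \<mu> (b k) \<le> expected_min b n (transport n \<mu>' (spread_kernel b p q \<theta>)) (b k)"
    "gap_points b n \<mu> (transport n \<mu>' (spread_kernel b p q \<theta>)) \<subset> gap_points b n \<mu> \<mu>'"
proof -
  let ?F = "expected_min b n \<mu>" and ?F' = "expected_min b n \<mu>'"
  obtain p q where pq: "p < q" "q \<le> n" "{p<..<q} \<noteq> {}" "?F (b p) = ?F' (b p)" "?F (b q) = ?F' (b q)"
    and less: "\<And>k. k \<in> {p<..<q} \<Longrightarrow> ?F (b k) < ?F' (b k)"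
    using gap_interval[OF b \<mu> \<mu>' le top gap] by blast
  define T where "T = expected_min b n (transport n \<mu>' (spread_kernel b p q 1))"
  have T_le: "T (b k) \<le> ?F (b k)" if "k \<in> {p<..<q}" for k
    using full_spread_inside[OF b \<mu> pq(1,2,4,5), folded T_def] that by simp
  obtain \<theta> k1 where \<theta>: "0 \<le> \<theta>" "\<theta> \<le> 1"
    and k1: "k1 \<in> {p<..<q}" "(1 - \<theta>) * ?F' (b k1) + \<theta> * T (b k1) = ?F (b k1)"
    and above: "\<And>k. k \<in> {p<..<q} \<Longrightarrow> ?F (b k) \<le> (1 - \<theta>) * ?F' (b k) + \<theta> * T (b k)"
    using mixing_weight_touch[of _ "\<lambda>k. T (b k)" "\<lambda>k. ?F (b k)" "\<lambda>k. ?F' (b k)", OF _ pq(3) T_le less]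
    by blast
  define F'' where "F'' = expected_min b n (transport n \<mu>' (spread_kernel b p q \<theta>))"
  have F'': "F'' x = (1 - \<theta>) * ?F' x + \<theta> * T x" for x
    unfolding F''_def T_def using expected_min_transport_spread[OF pq(2,1)] .
  have outside: "F'' (b k) = ?F' (b k)" if "k \<le> n" "k \<notin> {p<..<q}" for k
  proof -
    have "T (b k) = ?F' (b k)"
      using full_spread_outside[OF b \<mu> pq(1,2,4,5), folded T_def, of k] that by auto
    then show ?thesis unfolding F'' by (simp add: algebra_simps)
  qed
  have le'': "?F (b k) \<le> F'' (b k)" if "k \<le> n" for k
    using above[of k] outside[OF that] le[OF that] F'' by (cases "k \<in> {p<..<q}") auto
  have "k \<in> gap_points b n \<mu> \<mu>'" if "k \<in> gap_points b n \<mu> (transport n \<mu>' (spread_kernel b p q \<theta>))" for k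
    using that outside less pq(2) unfolding gap_points_def F''_def[symmetric] by (cases "k \<in> {p<..<q}") auto
  moreover have "k1 \<in> gap_points b n \<mu> \<mu>' - gap_points b n \<mu> (transport n \<mu>' (spread_kernel b p q \<theta>))"
    using k1 less[of k1] F''[of "b k1"] pq(2) unfolding gap_points_def F''_def[symmetric] by auto
  ultimately show ?thesis using that[OF pq(1,2) \<theta>] le'' unfolding F''_def by blast
qed

text \<open>Strassen's theorem on the grid, by induction on the number of breakpoints at which the two
  functions differ: each spread step closes at least one of these gaps and opens none.\<close>

lemma convex_order_martingale_kernel:
  assumes b: "strict_mono_on {..n} b" and \<mu>: "is_prob_vec n \<mu>"
  shows "is_prob_vec n \<mu>' \<Longrightarrow> (\<And>k. k \<le> n \<Longrightarrow> expected_min b n \<mu> (b k) \<le> expected_min b n \<mu>' (b k))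
    \<Longrightarrow> expected_min b n \<mu> (b n) = expected_min b n \<mu>' (b n)
    \<Longrightarrow> \<exists>\<pi>. martingale_kernel b n \<pi> \<and> (\<forall>m\<le>n. transport n \<mu>' \<pi> m = \<mu> m)"
proof (induction \<mu>' rule: measure_induct_rule[where f = "\<lambda>\<mu>'. card (gap_points b n \<mu> \<mu>')"])
  case (less \<mu>')
  show ?case
  proof (cases "gap_points b n \<mu> \<mu>' = {}")
    case True
    have "expected_min b n \<mu> (b k) = expected_min b n \<mu>' (b k)" if "k \<le> n" for k
    proof -
      have "\<not> expected_min b n \<mu> (b k) < expected_min b n \<mu>' (b k)"
        using True that unfolding gap_points_def by blast
      then show ?thesis using less.prems(2)[OF that] by simp
    qed
    then have "transport n \<mu>' (\<lambda>j m. of_bool (m = j)) m = \<mu> m" if "m \<le> n" for m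
      using expected_min_grid_inject[OF b \<mu> less.prems(1) _ that] transport_id[OF that] by simp
    then show ?thesis using martingale_kernel_id by blast
  next
    case False
    obtain p q \<theta> where pq: "p < q" "q \<le> n" and \<theta>: "0 \<le> \<theta>" "\<theta> \<le> 1"
      and le: "\<And>k. k \<le> n \<Longrightarrow> expected_min b n \<mu> (b k) \<le> expected_min b n (transport n \<mu>' (spread_kernel b p q \<theta>)) (b k)"
      and shrink: "gap_points b n \<mu> (transport n \<mu>' (spread_kernel b p q \<theta>)) \<subset> gap_points b n \<mu> \<mu>'"
      using spread_shrinks_gap[OF b \<mu> less.prems False] by blast
    have K: "martingale_kernel b n (spread_kernel b p q \<theta>)" using martingale_kernel_spread[OF b pq \<theta>] .
    have "finite (gap_points b n \<mu> \<mu>')" unfolding gap_points_def by simp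
    then have "card (gap_points b n \<mu> (transport n \<mu>' (spread_kernel b p q \<theta>))) < card (gap_points b n \<mu> \<mu>')"
      using shrink by (rule psubset_card_mono)
    moreover have "expected_min b n \<mu> (b n) = expected_min b n (transport n \<mu>' (spread_kernel b p q \<theta>)) (b n)"
      using expected_min_transport_top[OF b K] less.prems(3) by simp
    ultimately obtain \<rho> where \<rho>: "martingale_kernel b n \<rho>"
      "\<forall>m\<le>n. transport n (transport n \<mu>' (spread_kernel b p q \<theta>)) \<rho> m = \<mu> m"
      using less.IH[OF _ prob_vec_transport[OF less.prems(1) K] le] by blast
    then show ?thesis using martingale_kernel_comp[OF K] transport_transport by metis
  qed
qed

section \<open>The concave envelope over Q is antitone\<close>

lemma row_convex_order_kernel:
  assumes b: "strict_mono_on {..n} b" and t: "row_of_distr b n \<mu> t" and t': "row_of_distr b n \<mu>' t'"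
    and le: "\<And>k. k \<le> n \<Longrightarrow> t k \<le> t' k" and top: "t n = t' n"
  shows "\<exists>\<pi>. martingale_kernel b n \<pi> \<and> (\<forall>m\<le>n. transport n \<mu>' \<pi> m = \<mu> m)"
proof (rule convex_order_martingale_kernel[OF b])
  have tF: "\<And>k. k \<le> n \<Longrightarrow> t k = expected_min b n \<mu> (b k)"
    and t'F: "\<And>k. k \<le> n \<Longrightarrow> t' k = expected_min b n \<mu>' (b k)"
    using t t' by (simp_all add: row_of_distr_def)
  show "is_prob_vec n \<mu>" "is_prob_vec n \<mu>'" using t t' by (simp_all add: row_of_distr_def)
  show "expected_min b n \<mu> (b k) \<le> expected_min b n \<mu>' (b k)" if "k \<le> n" for k
    using le[OF that] tF[OF that] t'F[OF that] by simp
  show "expected_min b n \<mu> (b n) = expected_min b n \<mu>' (b n)" using top tF[of n] t'F[of n] by simp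
qed

lemma row_of_distr_mixture:
  assumes "finite K" "\<And>k. k \<in> K \<Longrightarrow> 0 \<le> c k" "sum c K = 1"
    and rows: "\<And>k. k \<in> K \<Longrightarrow> row_of_distr b n (\<nu> k) (t k)"
  shows "row_of_distr b n (\<lambda>m. \<Sum>k\<in>K. c k * \<nu> k m) (\<lambda>j. \<Sum>k\<in>K. c k * t k j)"
proof -
  have "(\<Sum>m\<le>n. \<Sum>k\<in>K. c k * \<nu> k m) = (\<Sum>k\<in>K. c k * (\<Sum>m\<le>n. \<nu> k m))"
    by (subst sum.swap) (simp add: sum_distrib_left)
  also have "\<dots> = 1" using rows assms(3) by (simp add: row_of_distr_def is_prob_vec_def)
  finally have "is_prob_vec n (\<lambda>m. \<Sum>k\<in>K. c k * \<nu> k m)"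
    using assms rows unfolding is_prob_vec_def row_of_distr_def by (auto intro!: sum_nonneg)
  moreover have "(\<Sum>k\<in>K. c k * t k j) = expected_min b n (\<lambda>m. \<Sum>k\<in>K. c k * \<nu> k m) (b j)" if "j \<le> n" for j
    using rows that by (simp add: expected_min_mixture row_of_distr_def)
  ultimately show ?thesis unfolding row_of_distr_def by blast
qed

lemma Qset_zero_beyond:
  assumes "\<And>i. strict_mono_on {..n} (a i)" "s \<in> Qset a n" "n < k"
  shows "s i k = 0"
  using assms Qset_iff by blast

lemma Qset_is_mat:
  assumes "\<And>i. strict_mono_on {..n} (a i)" "s \<in> Qset a n"
  shows "is_mat n s"
  using Qset_zero_beyond[where a = a, OF assms] by (simp add: is_mat_def)

lemma Qset_convex_combination:
  assumes a: "\<And>i. strict_mono_on {..n} (a i)" and K: "finite K"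
    and cy: "\<And>k. k \<in> K \<Longrightarrow> 0 \<le> c k \<and> y k \<in> Qset a n" and c1: "sum c K = 1"
  shows "(\<lambda>i j. \<Sum>k\<in>K. c k * y k i j) \<in> Qset a n"
  unfolding Qset_iff[where a = a, OF a]
proof (intro allI conjI impI)
  fix i
  have "\<forall>k\<in>K. \<exists>\<nu>. row_of_distr (a i) n \<nu> (y k i)" using cy Qset_iff[where a = a, OF a] by blast
  then obtain \<nu> where "\<And>k. k \<in> K \<Longrightarrow> row_of_distr (a i) n (\<nu> k) (y k i)" by metis
  then show "\<exists>\<mu>. row_of_distr (a i) n \<mu> (\<lambda>j. \<Sum>k\<in>K. c k * y k i j)"
    using row_of_distr_mixture[OF K _ c1, where \<nu> = \<nu> and t = "\<lambda>k. y k i"] cy by blast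
  show "(\<Sum>k\<in>K. c k * y k i j) = 0" if "n < j" for j
    using cy Qset_zero_beyond[where a = a, OF a _ that] by (auto intro!: sum.neutral)
qed

lemma concQ_outside:
  assumes a: "\<And>i. strict_mono_on {..n} (a i)" and s: "s \<notin> Qset a n"
  shows "concQ a n \<phi> s = -\<infinity>"
proof -
  have "\<not> (finite K \<and> (\<forall>k\<in>K. 0 \<le> c k \<and> y k \<in> Qset a n) \<and> sum c K = 1
      \<and> (\<lambda>i j. \<Sum>k\<in>K. c k * y k i j) = s)" for K :: "nat set" and c y
    using Qset_convex_combination[where a = a, OF a] s by blast
  then show ?thesis unfolding concQ_def conc_mat_def Sup_eq_MInfty by blast
qed

lemma Qset_decomposition_transport:
  assumes a: "\<And>i. strict_mono_on {..n} (a i)" and s: "s \<in> Qset a n"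
    and le: "\<And>i k. k \<le> n \<Longrightarrow> s i k \<le> s' i k" and top: "\<And>i. s i n = s' i n"
    and K: "finite K" and cy: "\<And>k. k \<in> K \<Longrightarrow> 0 \<le> c k \<and> y k \<in> Qset a n" and c1: "sum c K = 1"
    and s': "(\<lambda>i j. \<Sum>k\<in>K. c k * y k i j) = s'"
  obtains y' where "\<And>k. k \<in> K \<Longrightarrow> y' k \<in> Qset a n" "\<And>k i. k \<in> K \<Longrightarrow> y' k i n = y k i n"
    "(\<lambda>i j. \<Sum>k\<in>K. c k * y' k i j) = s"
proof -
  have "\<forall>k\<in>K. \<forall>i. \<exists>\<nu>. row_of_distr (a i) n \<nu> (y k i)" using cy Qset_iff[where a = a, OF a] by blast
  then obtain \<nu> where \<nu>: "\<And>k i. k \<in> K \<Longrightarrow> row_of_distr (a i) n (\<nu> k i) (y k i)" by metis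
  obtain \<mu> where \<mu>: "\<And>i. row_of_distr (a i) n (\<mu> i) (s i)" using s Qset_iff[where a = a, OF a] by metis
  define \<mu>' where "\<mu>' i = (\<lambda>m. \<Sum>k\<in>K. c k * \<nu> k i m)" for i
  have \<mu>': "row_of_distr (a i) n (\<mu>' i) (s' i)" for i
    using row_of_distr_mixture[OF K _ c1, where \<nu> = "\<lambda>k. \<nu> k i" and t = "\<lambda>k. y k i"] cy \<nu>
    unfolding \<mu>'_def s'[symmetric] by blast
  have "\<exists>\<pi>. martingale_kernel (a i) n \<pi> \<and> (\<forall>m\<le>n. transport n (\<mu>' i) \<pi> m = \<mu> i m)" for i
    using row_convex_order_kernel[OF a[of i] \<mu>[of i] \<mu>'[of i]] le top by blast
  then obtain \<pi> where \<pi>: "\<And>i. martingale_kernel (a i) n (\<pi> i)"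
    and \<pi>\<mu>: "\<And>i m. m \<le> n \<Longrightarrow> transport n (\<mu>' i) (\<pi> i) m = \<mu> i m" by metis
  define y' where "y' k i j = (if j \<le> n then expected_min (a i) n (transport n (\<nu> k i) (\<pi> i)) (a i j) else 0)"
    for k i j
  show ?thesis
  proof
    fix k assume k: "k \<in> K"
    show "y' k \<in> Qset a n"
      unfolding Qset_iff[where a = a, OF a]
    proof (intro allI conjI impI)
      fix i
      have "is_prob_vec n (transport n (\<nu> k i) (\<pi> i))"
        using \<nu>[OF k, of i] \<pi>[of i] by (intro prob_vec_transport) (simp_all add: row_of_distr_def)
      then show "\<exists>\<mu>. row_of_distr (a i) n \<mu> (y' k i)" unfolding row_of_distr_def y'_def by auto
      show "y' k i j = 0" if "n < j" for j using that by (simp add: y'_def)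
    qed
    show "y' k i n = y k i n" for i
      using expected_min_transport_top[OF a[of i] \<pi>[of i]] \<nu>[OF k] by (simp add: y'_def row_of_distr_def)
  next
    have "(\<Sum>k\<in>K. c k * y' k i j) = s i j" for i j
    proof (cases "j \<le> n")
      case True
      have "(\<Sum>k\<in>K. c k * y' k i j) = expected_min (a i) n (transport n (\<mu>' i) (\<pi> i)) (a i j)"
        using True by (simp add: y'_def \<mu>'_def transport_mixture flip: expected_min_mixture)
      also have "\<dots> = s i j"
        using \<mu>[of i] True \<pi>\<mu> by (simp add: row_of_distr_def cong: expected_min_cong)
      finally show ?thesis .
    qed (simp add: y'_def Qset_zero_beyond[where a = a, OF a s])
    then show "(\<lambda>i j. \<Sum>k\<in>K. c k * y' k i j) = s" by blast
  qed
qed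

lemma concQ_antitone:
  assumes a: "\<And>i. strict_mono_on {..n} (a i)" and s: "s \<in> Qset a n"
    and le: "\<And>i k. k \<le> n \<Longrightarrow> s i k \<le> s' i k" and top: "\<And>i. s i n = s' i n"
  shows "concQ a n \<phi> s' \<le> concQ a n \<phi> s"
proof -
  let ?S = "\<lambda>s. {ereal (\<Sum>k\<in>K. c k * phibar \<phi> n (y k)) |(K::nat set) c y.
    finite K \<and> (\<forall>k\<in>K. 0 \<le> c k \<and> y k \<in> Qset a n) \<and> sum c K = 1 \<and> (\<lambda>i j. \<Sum>k\<in>K. c k * y k i j) = s}"
  have "v \<le> Sup (?S s)" if mem: "v \<in> ?S s'" for v
  proof -
    obtain K :: "nat set" and c y where v: "v = ereal (\<Sum>k\<in>K. c k * phibar \<phi> n (y k))"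
      and K: "finite K" and cy: "\<And>k. k \<in> K \<Longrightarrow> 0 \<le> c k \<and> y k \<in> Qset a n" and c1: "sum c K = 1"
      and s': "(\<lambda>i j. \<Sum>k\<in>K. c k * y k i j) = s'"
      using mem by blast
    obtain y' where y': "\<And>k. k \<in> K \<Longrightarrow> y' k \<in> Qset a n" "\<And>k i. k \<in> K \<Longrightarrow> y' k i n = y k i n"
      and s: "(\<lambda>i j. \<Sum>k\<in>K. c k * y' k i j) = s"
      using Qset_decomposition_transport[where a = a, OF a s le top K cy c1 s'] by blast
    have "v = ereal (\<Sum>k\<in>K. c k * phibar \<phi> n (y' k))"
      using v y'(2) by (simp add: phibar_def)
    also have "\<dots> \<in> ?S s" using K cy c1 y'(1) s by blast
    finally show ?thesis by (rule Sup_upper)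
  qed
  then show ?thesis unfolding concQ_def conc_mat_def by (rule Sup_least)
qed

section \<open>Concave envelopes of functions on the grid\<close>

definition comb_values :: "real set \<Rightarrow> (real \<Rightarrow> ereal) \<Rightarrow> real \<Rightarrow> ereal set" where
  "comb_values C g x = {(\<Sum>k\<in>K. ereal (c k) * g (y k)) | (K::nat set) c y.
      finite K \<and> (\<forall>k\<in>K. 0 \<le> c k \<and> y k \<in> C) \<and> sum c K = 1 \<and> (\<Sum>k\<in>K. c k * y k) = x}"

lemma conc_line_eq_Sup: "conc_line C g x = Sup (comb_values C g x)"
  unfolding conc_line_def comb_values_def ..

lemma conc_line_ge:
  assumes "x \<in> C"
  shows "g x \<le> conc_line C g x"
proof -
  have "(\<Sum>k\<in>{0::nat}. ereal 1 * g x) \<in> comb_values C g x"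
    unfolding comb_values_def using assms
    by (intro CollectI exI[of _ "{0::nat}"] exI[of _ "\<lambda>_. 1"] exI[of _ "\<lambda>_. x"]) auto
  then show ?thesis unfolding conc_line_eq_Sup by (simp add: Sup_upper)
qed

lemma conc_line_ge_two_point:
  assumes "x1 \<in> C" "x2 \<in> C" "0 \<le> t" "t \<le> 1"
  shows "ereal (1 - t) * g x1 + ereal t * g x2 \<le> conc_line C g ((1 - t) * x1 + t * x2)"
proof -
  define c where "c k = (if k = 0 then 1 - t else t)" for k :: nat
  define y where "y k = (if k = 0 then x1 else x2)" for k :: nat
  have "(\<Sum>k\<in>{0::nat, 1}. ereal (c k) * g (y k)) \<in> comb_values C g ((1 - t) * x1 + t * x2)"
    unfolding comb_values_def using assms
    by (intro CollectI exI[of _ "{0::nat, 1}"] exI[of _ c] exI[of _ y]) (auto simp: c_def y_def)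
  then show ?thesis unfolding conc_line_eq_Sup by (auto simp: c_def y_def intro: Sup_upper2)
qed

lemma conc_line_le_concave:
  assumes S: "concave_on C S" and g: "\<And>y. y \<in> C \<Longrightarrow> g y \<le> ereal (S y)"
  shows "conc_line C g x \<le> ereal (S x)"
  unfolding conc_line_eq_Sup
proof (rule Sup_least)
  fix v assume "v \<in> comb_values C g x"
  then obtain K :: "nat set" and c y where v: "v = (\<Sum>k\<in>K. ereal (c k) * g (y k))" and K: "finite K"
    and cy: "\<And>k. k \<in> K \<Longrightarrow> 0 \<le> c k \<and> y k \<in> C" and c1: "sum c K = 1" and x: "(\<Sum>k\<in>K. c k * y k) = x"
    unfolding comb_values_def by blast
  have "v \<le> (\<Sum>k\<in>K. ereal (c k * S (y k)))"
    unfolding v using cy g by (intro sum_mono) (auto simp flip: times_ereal.simps intro: ereal_mult_left_mono)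
  also have "\<dots> = ereal (\<Sum>k\<in>K. c k * S (y k))" by simp
  also have "\<dots> \<le> ereal (S x)"
    using concave_on_sum[OF K _ S c1, of y] cy c1 x by fastforce
  finally show "v \<le> ereal (S x)" .
qed

lemma ereal_mult_sum_distrib:
  assumes "\<And>k. k \<in> K \<Longrightarrow> f k \<noteq> \<infinity>"
  shows "ereal c * sum f K = (\<Sum>k\<in>K. ereal c * f k)"
  using assms
proof (induction K rule: infinite_finite_induct)
  case (insert x F)
  have "sum f F \<noteq> \<infinity>" "f x \<noteq> \<infinity>" using insert by (simp_all add: sum_Pinfty)
  then have "ereal c * (f x + sum f F) = ereal c * f x + ereal c * sum f F"
    by (intro ereal_distrib_left) auto
  then show ?case using insert by simp
qed auto

lemma comb_values_mix:
  assumes ninf: "\<And>y. g y \<noteq> \<infinity>" and t: "0 \<le> t" "t \<le> 1"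
    and v1: "ereal r1 \<in> comb_values C g x1" and v2: "ereal r2 \<in> comb_values C g x2"
  shows "ereal ((1 - t) * r1 + t * r2) \<in> comb_values C g ((1 - t) * x1 + t * x2)"
proof -
  obtain K1 :: "nat set" and c1 y1 where h1: "ereal r1 = (\<Sum>k\<in>K1. ereal (c1 k) * g (y1 k))" "finite K1"
    "\<forall>k\<in>K1. 0 \<le> c1 k \<and> y1 k \<in> C" "sum c1 K1 = 1" "(\<Sum>k\<in>K1. c1 k * y1 k) = x1"
    using v1 unfolding comb_values_def by blast
  obtain K2 :: "nat set" and c2 y2 where h2: "ereal r2 = (\<Sum>k\<in>K2. ereal (c2 k) * g (y2 k))" "finite K2"
    "\<forall>k\<in>K2. 0 \<le> c2 k \<and> y2 k \<in> C" "sum c2 K2 = 1" "(\<Sum>k\<in>K2. c2 k * y2 k) = x2"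
    using v2 unfolding comb_values_def by blast
  define K where "K = (\<lambda>k. 2 * k) ` K1 \<union> (\<lambda>k. 2 * k + 1) ` K2"
  define c where "c m = (if even m then (1 - t) * c1 (m div 2) else t * c2 (m div 2))" for m :: nat
  define y where "y m = (if even m then y1 (m div 2) else y2 (m div 2))" for m :: nat
  have split: "sum h K = (\<Sum>k\<in>K1. h (2 * k)) + (\<Sum>k\<in>K2. h (2 * k + 1))" for h :: "nat \<Rightarrow> 'a::comm_monoid_add"
  proof -
    have "(\<lambda>k. 2 * k) ` K1 \<inter> (\<lambda>k. 2 * k + 1) ` K2 = {}" by auto presburger
    then show ?thesis
      unfolding K_def using h1(2) h2(2) by (simp add: sum.union_disjoint sum.reindex inj_on_def)
  qed
  have fin: "ereal a * g z \<noteq> \<infinity>" if "0 \<le> a" for a z using ninf[of z] that by (cases "g z") auto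
  have "(\<Sum>k\<in>K. ereal (c k) * g (y k))
      = (\<Sum>k\<in>K1. ereal (1 - t) * (ereal (c1 k) * g (y1 k))) + (\<Sum>k\<in>K2. ereal t * (ereal (c2 k) * g (y2 k)))"
    by (simp add: split c_def y_def mult.assoc flip: times_ereal.simps(1))
  also have "\<dots> = ereal (1 - t) * (\<Sum>k\<in>K1. ereal (c1 k) * g (y1 k)) + ereal t * (\<Sum>k\<in>K2. ereal (c2 k) * g (y2 k))"
  proof -
    have "(\<Sum>k\<in>K1. ereal (1 - t) * (ereal (c1 k) * g (y1 k))) = ereal (1 - t) * (\<Sum>k\<in>K1. ereal (c1 k) * g (y1 k))"
      by (rule ereal_mult_sum_distrib[symmetric], rule fin) (use h1(3) in auto)
    moreover have "(\<Sum>k\<in>K2. ereal t * (ereal (c2 k) * g (y2 k))) = ereal t * (\<Sum>k\<in>K2. ereal (c2 k) * g (y2 k))"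
      by (rule ereal_mult_sum_distrib[symmetric], rule fin) (use h2(3) in auto)
    ultimately show ?thesis by simp
  qed
  also have "\<dots> = ereal ((1 - t) * r1 + t * r2)" by (simp flip: h1(1) h2(1))
  finally have "ereal ((1 - t) * r1 + t * r2) = (\<Sum>k\<in>K. ereal (c k) * g (y k))" ..
  moreover have "finite K" "\<forall>k\<in>K. 0 \<le> c k \<and> y k \<in> C" using h1 h2 t by (auto simp: K_def c_def y_def)
  moreover have "sum c K = 1" "(\<Sum>k\<in>K. c k * y k) = (1 - t) * x1 + t * x2"
    using h1(4,5) h2(4,5) by (simp_all add: split c_def y_def mult.assoc flip: sum_distrib_left)
  ultimately show ?thesis unfolding comb_values_def by blast
qed

lemma conc_line_approx:
  assumes "conc_line C g x = ereal e" "0 < \<epsilon>"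
  obtains r where "ereal r \<in> comb_values C g x" "e - \<epsilon> < r"
proof -
  have "ereal (e - \<epsilon>) < Sup (comb_values C g x)" using assms by (simp add: conc_line_eq_Sup)
  then obtain v where v: "v \<in> comb_values C g x" "ereal (e - \<epsilon>) < v" by (auto simp: less_Sup_iff)
  moreover have "v \<le> ereal e" using v(1) assms(1) by (metis Sup_upper conc_line_eq_Sup)
  ultimately show ?thesis using that by (cases v) auto
qed

lemma conc_line_concave:
  assumes ninf: "\<And>y. g y \<noteq> \<infinity>" and t: "0 \<le> t" "t \<le> 1"
    and e1: "conc_line C g x1 = ereal e1" and e2: "conc_line C g x2 = ereal e2"
  shows "ereal ((1 - t) * e1 + t * e2) \<le> conc_line C g ((1 - t) * x1 + t * x2)"
proof (rule ereal_le_epsilon2)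
  fix \<epsilon> :: real assume "0 < \<epsilon>"
  obtain r1 where r1: "ereal r1 \<in> comb_values C g x1" "e1 - \<epsilon> < r1" by (rule conc_line_approx[OF e1 \<open>0 < \<epsilon>\<close>])
  obtain r2 where r2: "ereal r2 \<in> comb_values C g x2" "e2 - \<epsilon> < r2" by (rule conc_line_approx[OF e2 \<open>0 < \<epsilon>\<close>])
  have "(1 - t) * (e1 - \<epsilon>) \<le> (1 - t) * r1" "t * (e2 - \<epsilon>) \<le> t * r2"
    using r1 r2 t by (auto intro: mult_left_mono)
  then have "ereal ((1 - t) * e1 + t * e2) \<le> ereal ((1 - t) * r1 + t * r2) + ereal \<epsilon>"
    by (simp add: algebra_simps)
  also have "\<dots> \<le> conc_line C g ((1 - t) * x1 + t * x2) + ereal \<epsilon>"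
    unfolding conc_line_eq_Sup using comb_values_mix[OF ninf t r1(1) r2(1)] by (intro add_right_mono Sup_upper)
  finally show "ereal ((1 - t) * e1 + t * e2) \<le> conc_line C g ((1 - t) * x1 + t * x2) + ereal \<epsilon>" .
qed

lemma concave_on_affine: "convex C \<Longrightarrow> concave_on C (\<lambda>x::real. \<alpha> + \<beta> * x)"
  unfolding concave_on_def by (rule convex_onI) (auto simp: algebra_simps)

lemma slope_antitone_of_concave:
  fixes x0 x1 x2 y0 y1 y2 :: real
  assumes x: "x0 < x1" "x1 < x2" and y: "(1 - (x1 - x0) / (x2 - x0)) * y0 + (x1 - x0) / (x2 - x0) * y2 \<le> y1"
  shows "(y2 - y1) / (x2 - x1) \<le> (y1 - y0) / (x1 - x0)"
proof -
  define t where "t = (x1 - x0) / (x2 - x0)"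
  have t: "(x2 - x0) * t = x1 - x0" using x by (simp add: t_def)
  have "(x2 - x0) * ((1 - t) * y0 + t * y2) = (x2 - x0) * y0 - ((x2 - x0) * t) * y0 + ((x2 - x0) * t) * y2"
    by (simp add: algebra_simps)
  also have "\<dots> = (x2 - x1) * y0 + (x1 - x0) * y2" unfolding t by (simp add: algebra_simps)
  finally have "(x2 - x1) * y0 + (x1 - x0) * y2 \<le> (x2 - x0) * y1"
    using mult_left_mono[OF y[folded t_def], of "x2 - x0"] x by simp
  then have "(x1 - x0) * (y2 - y1) \<le> (x2 - x1) * (y1 - y0)" by (simp add: algebra_simps)
  then show ?thesis using x by (simp add: field_simps)
qed

lemma xi_grid:
  assumes "strict_mono_on {..n} b" "j \<le> n"
  shows "xi b n U (b j) = U j"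
proof -
  have "(THE j'. j' \<le> n \<and> b j' = b j) = j"
    using assms by (intro the_equality) (auto dest: strict_mono_on_eqD)
  then show ?thesis using assms(2) by (auto simp: xi_def)
qed

lemma xi_le:
  assumes "strict_mono_on {..n} b" "\<And>m. m \<le> n \<Longrightarrow> U m \<le> ereal (S (b m))"
  shows "xi b n U y \<le> ereal (S y)"
proof (cases "\<exists>j\<le>n. b j = y")
  case True
  then obtain j where "j \<le> n" "b j = y" by blast
  then show ?thesis using xi_grid[OF assms(1)] assms(2) by force
qed (auto simp: xi_def)

lemma conc_xi_le_concave:
  assumes b: "strict_mono_on {..n} b" and S: "concave_on {b 0..b n} S"
    and U: "\<And>m. m \<le> n \<Longrightarrow> U m \<le> ereal (S (b m))"
  shows "conc_xi b n U x \<le> ereal (S x)"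
  unfolding conc_xi_def using S xi_le[where S = S, OF b U] by (rule conc_line_le_concave)

lemma grid_in_range:
  fixes b :: "nat \<Rightarrow> real"
  assumes "strict_mono_on {..n} b" "j \<le> n"
  shows "b j \<in> {b 0..b n}"
  using strict_mono_on_leD[OF assms(1), of 0 j] strict_mono_on_leD[OF assms(1), of j n] assms(2) by simp

lemma conc_xi_ge:
  assumes b: "strict_mono_on {..n} b" and j: "j \<le> n"
  shows "U j \<le> conc_xi b n U (b j)"
  using conc_line_ge[OF grid_in_range[OF b j], of "xi b n U"] xi_grid[OF b j] by (simp add: conc_xi_def)

lemma conc_xi_finite:
  assumes b: "strict_mono_on {..n} b" and n: "0 < n" and ninf: "\<And>j. U j \<noteq> \<infinity>"
    and U0: "U 0 = ereal u0" and Un: "U n = ereal un" and x: "x \<in> {b 0..b n}"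
  shows "\<bar>conc_xi b n U x\<bar> \<noteq> \<infinity>"
proof -
  define t where "t = (x - b 0) / (b n - b 0)"
  have "b 0 < b n" using strict_mono_onD[OF b] n by simp
  then have "t * (b n - b 0) = x - b 0" by (simp add: t_def)
  then have "(1 - t) * b 0 + t * b n = x" by (simp add: algebra_simps)
  moreover have "0 \<le> t" "t \<le> 1" using x \<open>b 0 < b n\<close> by (auto simp: t_def divide_le_eq_1)
  ultimately have "ereal (1 - t) * xi b n U (b 0) + ereal t * xi b n U (b n) \<le> conc_xi b n U x"
    unfolding conc_xi_def using conc_line_ge_two_point[of "b 0" "{b 0..b n}" "b n" t] x by auto
  then have "conc_xi b n U x \<noteq> -\<infinity>" using xi_grid[OF b, of 0 U] xi_grid[OF b, of n U] U0 Un by auto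
  moreover
  define M where "M = (\<Sum>m\<le>n. \<bar>real_of_ereal (U m)\<bar>)"
  have "U m \<le> ereal ((\<lambda>_. M) (b m))" if "m \<le> n" for m
  proof (cases "U m")
    case (real r)
    have "\<bar>real_of_ereal (U m)\<bar> \<le> M"
      unfolding M_def by (rule member_le_sum, use that in simp, rule abs_ge_zero, simp)
    then show ?thesis using real by simp
  qed (use ninf in auto)
  then have "conc_xi b n U x \<le> ereal M"
    using conc_xi_le_concave[OF b concave_on_affine[of _ M 0]] by simp
  ultimately show ?thesis by auto
qed

lemma conc_xi_top:
  assumes b: "strict_mono_on {..n} b" and ninf: "\<And>j. U j \<noteq> \<infinity>" and Un: "U n = ereal un"
  shows "conc_xi b n U (b n) = ereal un"
proof -
  define M where "M = (\<Sum>m<n. \<bar>real_of_ereal (U m) - un\<bar> / (b n - b m))"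
  have bound: "U m \<le> ereal (un + M * (b n - b m))" if "m \<le> n" for m
  proof (cases "m = n")
    case False
    then have "0 < b n - b m" using strict_mono_onD[OF b] that by simp
    show ?thesis
    proof (cases "U m")
      case (real r)
      have "\<bar>real_of_ereal (U m) - un\<bar> / (b n - b m) \<le> M"
        unfolding M_def
      proof (rule member_le_sum)
        show "m \<in> {..<n}" using that False by simp
        show "0 \<le> \<bar>real_of_ereal (U k) - un\<bar> / (b n - b k)" if "k \<in> {..<n} - {m}" for k
          using that strict_mono_onD[OF b, of k n] by simp
      qed simp
      then have "\<bar>r - un\<bar> / (b n - b m) \<le> M" using real by simp
      then have "\<bar>r - un\<bar> \<le> M * (b n - b m)" using \<open>0 < b n - b m\<close> by (simp add: field_simps)
      then show ?thesis using real by simp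
    qed (use ninf in auto)
  qed (simp add: Un)
  have affine: "concave_on {b 0..b n} (\<lambda>x. un + M * (b n - x))"
    using concave_on_affine[of "{b 0..b n}" "un + M * b n" "- M"] by (simp add: algebra_simps)
  have "conc_xi b n U (b n) \<le> ereal un"
    using conc_xi_le_concave[where S = "\<lambda>x. un + M * (b n - x)", OF b affine bound, of "b n"] by simp
  moreover have "ereal un \<le> conc_xi b n U (b n)" using conc_xi_ge[OF b order_refl, of U] unfolding Un .
  ultimately show ?thesis by (rule order_antisym)
qed

section \<open>The least point of Q above a lower bound\<close>

context
  fixes b :: "nat \<Rightarrow> real" and n :: nat and U :: "nat \<Rightarrow> ereal" and w :: real
  assumes b: "strict_mono_on {..n} b" and n: "0 < n" and ninf: "\<And>j. U j \<noteq> \<infinity>"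
    and U0: "U 0 = ereal (b 0)" and Un: "U n = ereal w"
begin

lemma envelope_finite: "j \<le> n \<Longrightarrow> ereal (real_of_ereal (conc_xi b n U (b j))) = conc_xi b n U (b j)"
  using conc_xi_finite[where U = U, OF b n ninf U0 Un grid_in_range[OF b]] by (simp add: ereal_real')

lemma envelope_ge: "j \<le> n \<Longrightarrow> U j \<le> ereal (real_of_ereal (conc_xi b n U (b j)))"
  using conc_xi_ge[OF b, of j U] by (simp add: envelope_finite)

lemma envelope_top: "real_of_ereal (conc_xi b n U (b n)) = w"
  using conc_xi_top[where U = U, OF b ninf Un] by simp

lemma envelope_le_row:
  assumes t: "row_of_distr b n \<mu> t" and Ut: "\<And>j. j \<le> n \<Longrightarrow> U j \<le> ereal (t j)" and j: "j \<le> n"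
  shows "real_of_ereal (conc_xi b n U (b j)) \<le> t j"
proof -
  have \<mu>: "is_prob_vec n \<mu>" and tF: "\<And>k. k \<le> n \<Longrightarrow> t k = expected_min b n \<mu> (b k)"
    using t by (auto simp: row_of_distr_def)
  have "conc_xi b n U (b j) \<le> ereal (expected_min b n \<mu> (b j))"
    using Ut tF by (intro conc_xi_le_concave[OF b concave_on_expected_min[OF \<mu> convex_real_interval(5)]]) auto
  then show ?thesis using envelope_finite[OF j] tF[OF j] by (metis ereal_less_eq(3))
qed

lemma envelope_slope_antitone:
  assumes j: "0 < j" "j < n"
  defines "e \<equiv> \<lambda>k. real_of_ereal (conc_xi b n U (b k))"
  shows "grid_slope b e (Suc j) \<le> grid_slope b e j"
proof -
  define wt where "wt = interp_weight b (j - 1) (Suc j) j"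
  have bj: "b (j - 1) < b j" "b j < b (Suc j)" using strict_mono_onD[OF b] j by auto
  have "(1 - wt) * b (j - 1) + wt * b (Suc j) = b j"
    using interp_weight_combination bj unfolding wt_def by simp
  moreover have "0 \<le> wt" "wt \<le> 1"
    using interp_weight_bounds[OF b, of "j - 1" j "Suc j"] j unfolding wt_def by auto
  ultimately have "ereal ((1 - wt) * e (j - 1) + wt * e (Suc j)) \<le> conc_xi b n U (b j)"
    using conc_line_concave[of "xi b n U" wt "{b 0..b n}" "b (j - 1)" "e (j - 1)" "b (Suc j)" "e (Suc j)"]
      envelope_finite[of "j - 1"] envelope_finite[of "Suc j"] ninf j
    unfolding e_def conc_xi_def by (simp add: xi_def)
  then have "(1 - wt) * e (j - 1) + wt * e (Suc j) \<le> e j"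
    using envelope_finite[of j] j unfolding e_def by (metis ereal_less_eq(3) less_imp_le)
  then show ?thesis
    using slope_antitone_of_concave[OF bj] j by (simp add: grid_slope_def wt_def interp_weight_def)
qed

lemma envelope_row_of_distr:
  assumes t: "row_of_distr b n \<mu> t" and Ut: "\<And>j. j \<le> n \<Longrightarrow> U j \<le> ereal (t j)" and tn: "t n = w"
  shows "\<exists>\<nu>. row_of_distr b n \<nu> (\<lambda>j. real_of_ereal (conc_xi b n U (b j)))"
proof -
  define e where "e = (\<lambda>j. real_of_ereal (conc_xi b n U (b j)))"
  have e_le: "e j \<le> t j" if "j \<le> n" for j unfolding e_def using envelope_le_row[OF t Ut that] .
  have "b 0 \<le> e 0" using envelope_ge[of 0] U0 by (simp add: e_def)
  then have e0: "e 0 = b 0" using e_le[of 0] row_of_distr_bottom[OF b t] by simp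
  have b_less: "b j < b (Suc j)" if "j < n" for j using strict_mono_onD[OF b] that by simp
  have "grid_slope b e (Suc j) \<le> grid_slope b e j" if j: "j < n" for j
  proof (cases "j = 0")
    case True
    have "e 1 \<le> b 1" using e_le[of 1] row_of_distr_le[OF t, of 1] n by simp
    then show ?thesis using True e0 b_less[of 0] n by (simp add: grid_slope_def)
  qed (use envelope_slope_antitone j in \<open>simp add: e_def\<close>)
  moreover have "0 \<le> grid_slope b e n"
  proof -
    have "e (n - 1) \<le> e n"
      using e_le[of "n - 1"] row_of_distr_mono[OF b t, of "n - 1" n] tn envelope_top by (simp add: e_def)
    then show ?thesis using b_less[of "n - 1"] n by (simp add: grid_slope_def)
  qed
  ultimately show ?thesis using row_of_distr_from_slopes[where t = e, OF b e0] unfolding e_def by blast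
qed

end


context
  fixes a :: "'d::finite \<Rightarrow> nat \<Rightarrow> real" and n :: nat and U :: "'d \<Rightarrow> nat \<Rightarrow> ereal" and w :: "'d \<Rightarrow> real"
  assumes a: "\<And>i. strict_mono_on {..n} (a i)" and n: "0 < n" and ninf: "\<And>i j. U i j \<noteq> \<infinity>"
    and U0: "\<And>i. U i 0 = ereal (a i 0)" and Un: "\<And>i. U i n = ereal (w i)"
begin

lemma env_mat_top: "env_mat a n U i n = w i"
  using envelope_top[where b = "a i" and U = "U i" and w = "w i", OF a n ninf U0 Un] by (simp add: env_mat_def)

lemma env_mat_ge: "j \<le> n \<Longrightarrow> U i j \<le> ereal (env_mat a n U i j)"
  using envelope_ge[where b = "a i" and U = "U i" and w = "w i", OF a n ninf U0 Un] by (simp add: env_mat_def)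

lemma env_mat_least:
  assumes s: "s \<in> Qset a n" and sn: "\<And>i. s i n = w i" and Us: "\<And>i j. j \<le> n \<Longrightarrow> U i j \<le> ereal (s i j)"
  shows "env_mat a n U \<in> Qset a n" and "\<And>i k. k \<le> n \<Longrightarrow> env_mat a n U i k \<le> s i k"
proof -
  obtain \<mu> where \<mu>: "\<And>i. row_of_distr (a i) n (\<mu> i) (s i)" using s Qset_iff[where a = a, OF a] by metis
  show "env_mat a n U i k \<le> s i k" if "k \<le> n" for i k
    using envelope_le_row[where b = "a i" and U = "U i" and w = "w i", OF a n ninf U0 Un \<mu> Us that] that by (simp add: env_mat_def)
  show "env_mat a n U \<in> Qset a n"
    unfolding Qset_iff[where a = a, OF a]
  proof (intro allI conjI impI)
    fix i
    obtain \<nu> where "row_of_distr (a i) n \<nu> (\<lambda>j. real_of_ereal (conc_xi (a i) n (U i) (a i j)))"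
      using envelope_row_of_distr[where b = "a i" and U = "U i" and w = "w i", OF a n ninf U0 Un \<mu> Us sn] by blast
    then show "\<exists>\<nu>. row_of_distr (a i) n \<nu> (env_mat a n U i)"
      by (auto simp: row_of_distr_def env_mat_def)
    show "env_mat a n U i k = 0" if "n < k" for k using that by (simp add: env_mat_def)
  qed
qed

lemma Sup_concQ_eq_env_mat:
  assumes P: "\<And>s. s \<in> Qset a n \<Longrightarrow> P s \<longleftrightarrow> (\<forall>i. s i n = w i) \<and> (\<forall>i j. j \<le> n \<longrightarrow> U i j \<le> ereal (s i j))"
  shows "Sup {concQ a n \<phi> s | s. P s} = concQ a n \<phi> (env_mat a n U)"
proof (rule antisym)
  show "Sup {concQ a n \<phi> s | s. P s} \<le> concQ a n \<phi> (env_mat a n U)"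
  proof (rule Sup_least, clarify)
    fix s assume "P s"
    show "concQ a n \<phi> s \<le> concQ a n \<phi> (env_mat a n U)"
    proof (cases "s \<in> Qset a n")
      case True
      then have sn: "\<And>i. s i n = w i" and Us: "\<And>i j. j \<le> n \<Longrightarrow> U i j \<le> ereal (s i j)"
        using P \<open>P s\<close> by auto
      show ?thesis
        using env_mat_least[OF True sn Us] env_mat_top sn
        by (intro concQ_antitone[where a = a, OF a]) auto
    qed (simp add: concQ_outside[where a = a, OF a])
  qed
  show "concQ a n \<phi> (env_mat a n U) \<le> Sup {concQ a n \<phi> s | s. P s}"
  proof (cases "env_mat a n U \<in> Qset a n")
    case True
    then have "P (env_mat a n U)" using P env_mat_top env_mat_ge by blast
    then show ?thesis by (auto intro: Sup_upper)
  qed (simp add: concQ_outside[where a = a, OF a])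
qed

end

section \<open>The constraints (Inc-1)\<close>

lemma Zmap_eq_tail_mass:
  assumes "strict_mono_on {..n} (a i)" "row_of_distr (a i) n \<mu> (s i)" "j \<le> n"
  shows "Zmap a s i j = tail_mass n \<mu> j"
  using grid_slope_row_of_distr[OF assms] by (simp add: Zmap_def grid_slope_def)

lemma breakpoint_choice_iff:
  assumes b: "strict_mono_on {..n} b" and t: "row_of_distr b n \<mu> t" and k: "0 < k" "k < n"
  shows "(\<exists>d\<in>{0, 1}. tail_mass n \<mu> (k + 1) \<le> d \<and> d \<le> tail_mass n \<mu> k)
    \<longleftrightarrow> (\<forall>j\<le>k. t j = b j) \<or> (\<forall>j. k \<le> j \<longrightarrow> j \<le> n \<longrightarrow> t j = t n)"
proof -
  have \<mu>: "is_prob_vec n \<mu>" and tF: "\<And>j. j \<le> n \<Longrightarrow> t j = expected_min b n \<mu> (b j)"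
    using t by (auto simp: row_of_distr_def)
  have slope: "grid_slope b t j = tail_mass n \<mu> j" if "j \<le> n" for j
    using grid_slope_row_of_distr[OF b t that] .
  have "(\<forall>j\<le>k. t j = b j) \<longleftrightarrow> tail_mass n \<mu> k = 1"
  proof
    assume "\<forall>j\<le>k. t j = b j"
    moreover have "b (k - 1) < b k" using strict_mono_onD[OF b, of "k - 1" k] k by simp
    ultimately show "tail_mass n \<mu> k = 1" using slope[of k] k by (simp add: grid_slope_def)
  next
    assume "tail_mass n \<mu> k = 1"
    then have "\<mu> m = 0" if "m < k" for m using tail_mass_ge_1_imp_zero[OF \<mu> _ that] that k by simp
    then have support: "k \<le> m" if "\<mu> m \<noteq> 0" for m using that not_less by blast
    have "b j \<le> b m" if "j \<le> k" "m \<le> n" "\<mu> m \<noteq> 0" for j m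
      using that k support[of m] by (intro strict_mono_on_leD[OF b]) auto
    then show "\<forall>j\<le>k. t j = b j" using tF k by (simp add: expected_min_eq_self[OF \<mu>])
  qed
  moreover have "(\<forall>j. k \<le> j \<longrightarrow> j \<le> n \<longrightarrow> t j = t n) \<longleftrightarrow> tail_mass n \<mu> (k + 1) = 0"
  proof
    assume const: "\<forall>j. k \<le> j \<longrightarrow> j \<le> n \<longrightarrow> t j = t n"
    have "t (k + 1) = t k" using const[rule_format, of "k + 1"] const[rule_format, of k] k by simp
    moreover have "b k < b (k + 1)" using strict_mono_onD[OF b, of k "k + 1"] k by simp
    ultimately show "tail_mass n \<mu> (k + 1) = 0" using slope[of "k + 1"] k by (simp add: grid_slope_def)
  next
    assume "tail_mass n \<mu> (k + 1) = 0"
    then have "\<mu> m = 0" if "k < m" "m \<le> n" for m using tail_mass_le_0_imp_zero[OF \<mu>, of "k + 1" m] that by simp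
    then have support: "m \<le> k" if "m \<le> n" "\<mu> m \<noteq> 0" for m using that not_less by blast
    have "b m \<le> b j" if "k \<le> j" "j \<le> n" "m \<le> n" "\<mu> m \<noteq> 0" for j m
      using that support[of m] by (intro strict_mono_on_leD[OF b]) auto
    then have "t j = (\<Sum>m\<le>n. \<mu> m * b m)" if "k \<le> j" "j \<le> n" for j
      using tF[OF that(2)] that by (simp add: expected_min_eq_mean)
    then show "\<forall>j. k \<le> j \<longrightarrow> j \<le> n \<longrightarrow> t j = t n" using k by simp
  qed
  moreover have "(\<exists>d\<in>{0, 1}. tail_mass n \<mu> (k + 1) \<le> d \<and> d \<le> tail_mass n \<mu> k)
      \<longleftrightarrow> tail_mass n \<mu> k = 1 \<or> tail_mass n \<mu> (k + 1) = 0"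
    using tail_mass_nonneg[OF \<mu>, of "k + 1"] tail_mass_le_1[OF \<mu>, of k]
      tail_mass_le_1[OF \<mu>, of "k + 1"] tail_mass_nonneg[OF \<mu>, of k] by auto
  ultimately show ?thesis by blast
qed


context
  fixes b :: "nat \<Rightarrow> real" and n :: nat and \<mu> t :: "nat \<Rightarrow> real" and w :: real
    and \<tau> :: "nat \<Rightarrow> nat" and l r :: nat
  assumes b: "strict_mono_on {..n} b" and t: "row_of_distr b n \<mu> t" and tn: "t n = w"
    and \<tau>: "strict_mono_on {..l} \<tau>" "\<tau> 0 = 0" "\<tau> l = n"
    and r: "1 \<le> r" "r \<le> l" and w: "b (\<tau> (r - 1)) \<le> w" "w \<le> b (\<tau> r)"
begin

lemma breakpoint_le_n: "s \<le> l \<Longrightarrow> \<tau> s \<le> n"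
  using strict_mono_on_leD[OF \<tau>(1), of s l] \<tau>(3) by simp

lemma breakpoint_cases_imp_above:
  assumes H: "\<forall>s\<in>{1..<l}. (\<forall>j\<le>\<tau> s. t j = b j) \<or> (\<forall>j. \<tau> s \<le> j \<longrightarrow> j \<le> n \<longrightarrow> t j = t n)"
  shows "(\<forall>j\<le>\<tau> (r - 1). b j \<le> t j) \<and> (\<forall>j. \<tau> r \<le> j \<longrightarrow> j \<le> n \<longrightarrow> w \<le> t j)"
proof (intro conjI allI impI)
  fix j assume j: "j \<le> \<tau> (r - 1)"
  have \<tau>_r1: "\<tau> (r - 1) \<le> n" using breakpoint_le_n r by simp
  show "b j \<le> t j"
  proof (cases "r - 1 = 0")
    case True
    then show ?thesis using j \<tau>(2) row_of_distr_bottom[OF b t] by simp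
  next
    case False
    then have "r - 1 \<in> {1..<l}" using r by auto
    then consider "\<forall>j\<le>\<tau> (r - 1). t j = b j" | "\<forall>j. \<tau> (r - 1) \<le> j \<longrightarrow> j \<le> n \<longrightarrow> t j = t n"
      using H by blast
    then show ?thesis
    proof cases
      case 2
      then have "t (\<tau> (r - 1)) = w" using tn \<tau>_r1 by simp
      then show ?thesis using row_of_distr_diff_le[OF b t j \<tau>_r1] w(1) by simp
    qed (use j in simp)
  qed
next
  fix j assume j: "\<tau> r \<le> j" "j \<le> n"
  show "w \<le> t j"
  proof (cases "r = l")
    case True
    then show ?thesis using j \<tau>(3) tn by simp
  next
    case False
    then have "r \<in> {1..<l}" using r by auto
    then consider "\<forall>j\<le>\<tau> r. t j = b j" | "\<forall>j. \<tau> r \<le> j \<longrightarrow> j \<le> n \<longrightarrow> t j = t n"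
      using H by blast
    then show ?thesis
    proof cases
      case 1
      then show ?thesis using row_of_distr_mono[OF b t j] w(2) by simp
    qed (use j tn in simp)
  qed
qed

lemma above_imp_breakpoint_cases:
  assumes lo: "\<forall>j\<le>\<tau> (r - 1). b j \<le> t j" and hi: "\<forall>j. \<tau> r \<le> j \<longrightarrow> j \<le> n \<longrightarrow> w \<le> t j"
  shows "\<forall>s\<in>{1..<l}. (\<forall>j\<le>\<tau> s. t j = b j) \<or> (\<forall>j. \<tau> s \<le> j \<longrightarrow> j \<le> n \<longrightarrow> t j = t n)"
proof
  fix s assume s: "s \<in> {1..<l}"
  show "(\<forall>j\<le>\<tau> s. t j = b j) \<or> (\<forall>j. \<tau> s \<le> j \<longrightarrow> j \<le> n \<longrightarrow> t j = t n)"
  proof (cases "s < r")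
    case True
    then have "\<tau> s \<le> \<tau> (r - 1)" using strict_mono_on_leD[OF \<tau>(1), of s "r - 1"] r by simp
    moreover have "\<tau> (r - 1) \<le> n" using breakpoint_le_n r by simp
    ultimately have "t j = b j" if "j \<le> \<tau> s" for j
      using lo row_of_distr_le[OF t, of j] that by (simp add: order_antisym)
    then show ?thesis by blast
  next
    case False
    then have "\<tau> r \<le> \<tau> s" using strict_mono_on_leD[OF \<tau>(1), of r s] s by simp
    then have "t j = t n" if "\<tau> s \<le> j" "j \<le> n" for j
      using hi row_of_distr_mono[OF b t that(2) order_refl] that tn by (simp add: order_antisym)
    then show ?thesis by blast
  qed
qed

lemma breakpoint_cases_iff_above:
  "(\<forall>s\<in>{1..<l}. (\<forall>j\<le>\<tau> s. t j = b j) \<or> (\<forall>j. \<tau> s \<le> j \<longrightarrow> j \<le> n \<longrightarrow> t j = t n))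
    \<longleftrightarrow> (\<forall>j\<le>\<tau> (r - 1). b j \<le> t j) \<and> (\<forall>j. \<tau> r \<le> j \<longrightarrow> j \<le> n \<longrightarrow> w \<le> t j)"
  using breakpoint_cases_imp_above above_imp_breakpoint_cases by blast

end

lemma Inc1_iff_breakpoints:
  assumes a: "\<And>i. strict_mono_on {..n} (a i)" and s: "s \<in> Qset a n"
    and \<tau>: "\<And>i t. 1 \<le> t \<Longrightarrow> t < l i \<Longrightarrow> 0 < \<tau> i t \<and> \<tau> i t < n"
  shows "(\<exists>\<delta>. Inc1 \<tau> l n (Zmap a s) \<delta>) \<longleftrightarrow>
    (\<forall>i. \<forall>t\<in>{1..<l i}. (\<forall>j\<le>\<tau> i t. s i j = a i j) \<or> (\<forall>j. \<tau> i t \<le> j \<longrightarrow> j \<le> n \<longrightarrow> s i j = s i n))"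
proof -
  obtain \<mu> where \<mu>: "\<And>i. row_of_distr (a i) n (\<mu> i) (s i)" using s Qset_iff[where a = a, OF a] by metis
  have Z: "Zmap a s i j = tail_mass n (\<mu> i) j" if "j \<le> n" for i j
    using Zmap_eq_tail_mass[OF a \<mu> that] .
  have p: "is_prob_vec n (\<mu> i)" for i using \<mu> by (simp add: row_of_distr_def)
  have tails: "Zmap a s i 0 = 1 \<and> (\<forall>j<n. Zmap a s i (Suc j) \<le> Zmap a s i j) \<and> 0 \<le> Zmap a s i n" for i
    using Z tail_mass_0[OF p] tail_mass_antimono[OF p] tail_mass_nonneg[OF p] by simp
  let ?P = "\<lambda>i t d. tail_mass n (\<mu> i) (\<tau> i t + 1) \<le> d \<and> d \<le> tail_mass n (\<mu> i) (\<tau> i t)"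
  have "Zmap a s i (\<tau> i t + 1) = tail_mass n (\<mu> i) (\<tau> i t + 1)" "Zmap a s i (\<tau> i t) = tail_mass n (\<mu> i) (\<tau> i t)"
    if "t \<in> {1..<l i}" for i t
    using Z \<tau>[of t i] that by auto
  then have "Inc1 \<tau> l n (Zmap a s) \<delta> \<longleftrightarrow> (\<forall>i. \<forall>t\<in>{1..<l i}. \<delta> i t \<in> {0, 1} \<and> ?P i t (\<delta> i t))" for \<delta>
    unfolding Inc1_def using tails by auto
  then have "(\<exists>\<delta>. Inc1 \<tau> l n (Zmap a s) \<delta>) \<longleftrightarrow> (\<exists>\<delta>. \<forall>i. \<forall>t\<in>{1..<l i}. \<delta> i t \<in> {0, 1} \<and> ?P i t (\<delta> i t))"
    by simp
  also have "\<dots> \<longleftrightarrow> (\<forall>i. \<forall>t\<in>{1..<l i}. \<exists>d\<in>{0, 1}. ?P i t d)"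
  proof
    assume "\<forall>i. \<forall>t\<in>{1..<l i}. \<exists>d\<in>{0, 1}. ?P i t d"
    then have "\<forall>i. \<forall>t\<in>{1..<l i}. (SOME d. d \<in> {0, 1} \<and> ?P i t d) \<in> {0, 1} \<and> ?P i t (SOME d. d \<in> {0, 1} \<and> ?P i t d)"
      by (metis (mono_tags, lifting) someI_ex)
    then show "\<exists>\<delta>. \<forall>i. \<forall>t\<in>{1..<l i}. \<delta> i t \<in> {0, 1} \<and> ?P i t (\<delta> i t)"
      by (intro exI[of _ "\<lambda>i t. SOME d. d \<in> {0, 1} \<and> ?P i t d"])
  qed blast
  also have "\<dots> \<longleftrightarrow>
      (\<forall>i. \<forall>t\<in>{1..<l i}. (\<forall>j\<le>\<tau> i t. s i j = a i j) \<or> (\<forall>j. \<tau> i t \<le> j \<longrightarrow> j \<le> n \<longrightarrow> s i j = s i n))"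
  proof -
    have "(\<exists>d\<in>{0, 1}. ?P i t d) \<longleftrightarrow>
        (\<forall>j\<le>\<tau> i t. s i j = a i j) \<or> (\<forall>j. \<tau> i t \<le> j \<longrightarrow> j \<le> n \<longrightarrow> s i j = s i n)"
      if "t \<in> {1..<l i}" for i t
      using breakpoint_choice_iff[OF a \<mu>, of "\<tau> i t"] \<tau>[of t i] that by simp
    then show ?thesis by simp
  qed
  finally show ?thesis .
qed


definition breakpoint_minorant ::
    "('d \<Rightarrow> nat \<Rightarrow> real) \<Rightarrow> ('d \<Rightarrow> nat \<Rightarrow> nat) \<Rightarrow> ('d \<Rightarrow> nat) \<Rightarrow> ('d \<Rightarrow> real) \<Rightarrow> 'd \<Rightarrow> nat \<Rightarrow> ereal" where
  "breakpoint_minorant a \<tau> r w i j =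
    (if j \<le> \<tau> i (r i - 1) then ereal (a i j) else if \<tau> i (r i) \<le> j then ereal (w i) else -\<infinity>)"

lemma breakpoint_minorant_0: "breakpoint_minorant a \<tau> r w i 0 = ereal (a i 0)"
  by (simp add: breakpoint_minorant_def)

lemma breakpoint_minorant_not_PInfty: "breakpoint_minorant a \<tau> r w i j \<noteq> \<infinity>"
  by (simp add: breakpoint_minorant_def)

context
  fixes a :: "'d \<Rightarrow> nat \<Rightarrow> real" and n :: nat and \<tau> :: "'d \<Rightarrow> nat \<Rightarrow> nat" and l r :: "'d \<Rightarrow> nat"
    and w :: "'d \<Rightarrow> real"
  assumes \<tau>: "\<And>i. strict_mono_on {..l i} (\<tau> i)" "\<And>i. \<tau> i 0 = 0" "\<And>i. \<tau> i (l i) = n"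
    and r: "\<And>i. 1 \<le> r i \<and> r i \<le> l i"
begin

lemma breakpoint_below_n: "\<tau> i (r i - 1) < \<tau> i (r i)" "\<tau> i (r i) \<le> n"
  using strict_mono_onD[OF \<tau>(1)[of i], of "r i - 1" "r i"] strict_mono_on_leD[OF \<tau>(1)[of i], of "r i" "l i"]
    r[of i] \<tau>(3)
  by auto

lemma breakpoint_minorant_n: "breakpoint_minorant a \<tau> r w i n = ereal (w i)"
  using breakpoint_below_n[of i] by (simp add: breakpoint_minorant_def)

lemma Inc1_iff_above_breakpoint_minorant:
  assumes a: "\<And>i. strict_mono_on {..n} (a i)" and w: "\<And>i. a i (\<tau> i (r i - 1)) \<le> w i \<and> w i \<le> a i (\<tau> i (r i))"
    and s: "s \<in> Qset a n" and sn: "\<And>i. s i n = w i"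
  shows "(\<exists>\<delta>. Inc1 \<tau> l n (Zmap a s) \<delta>) \<longleftrightarrow> (\<forall>i j. j \<le> n \<longrightarrow> breakpoint_minorant a \<tau> r w i j \<le> ereal (s i j))"
proof -
  have "0 < \<tau> i t \<and> \<tau> i t < n" if "1 \<le> t" "t < l i" for i t
    using strict_mono_onD[OF \<tau>(1)[of i], of 0 t] strict_mono_onD[OF \<tau>(1)[of i], of t "l i"] that \<tau>(2,3) by auto
  then have "(\<exists>\<delta>. Inc1 \<tau> l n (Zmap a s) \<delta>) \<longleftrightarrow>
      (\<forall>i. \<forall>t\<in>{1..<l i}. (\<forall>j\<le>\<tau> i t. s i j = a i j) \<or> (\<forall>j. \<tau> i t \<le> j \<longrightarrow> j \<le> n \<longrightarrow> s i j = s i n))"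
    by (rule Inc1_iff_breakpoints[OF a s])
  also have "\<dots> \<longleftrightarrow> (\<forall>i. (\<forall>j\<le>\<tau> i (r i - 1). a i j \<le> s i j) \<and> (\<forall>j. \<tau> i (r i) \<le> j \<longrightarrow> j \<le> n \<longrightarrow> w i \<le> s i j))"
  proof -
    obtain \<mu> where \<mu>: "\<And>i. row_of_distr (a i) n (\<mu> i) (s i)" using s Qset_iff[where a = a, OF a] by metis
    have "(\<forall>t\<in>{1..<l i}. (\<forall>j\<le>\<tau> i t. s i j = a i j) \<or> (\<forall>j. \<tau> i t \<le> j \<longrightarrow> j \<le> n \<longrightarrow> s i j = s i n))
        \<longleftrightarrow> (\<forall>j\<le>\<tau> i (r i - 1). a i j \<le> s i j) \<and> (\<forall>j. \<tau> i (r i) \<le> j \<longrightarrow> j \<le> n \<longrightarrow> w i \<le> s i j)" for i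
      using r[of i] w[of i]
      by (intro breakpoint_cases_iff_above[OF a[of i] \<mu>[of i] sn[of i] \<tau>(1)[of i] \<tau>(2)[of i] \<tau>(3)[of i]]) auto
    then show ?thesis by blast
  qed
  also have "\<dots> \<longleftrightarrow> (\<forall>i j. j \<le> n \<longrightarrow> breakpoint_minorant a \<tau> r w i j \<le> ereal (s i j))"
  proof -
    have "breakpoint_minorant a \<tau> r w i j \<le> ereal (s i j) \<longleftrightarrow>
        (j \<le> \<tau> i (r i - 1) \<longrightarrow> a i j \<le> s i j) \<and> (\<tau> i (r i) \<le> j \<longrightarrow> w i \<le> s i j)" for i j
      using breakpoint_below_n[of i] by (auto simp: breakpoint_minorant_def)
    moreover have "j \<le> n" if "j \<le> \<tau> i (r i - 1)" for i j using that breakpoint_below_n[of i] by simp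
    ultimately show ?thesis by auto
  qed
  finally show ?thesis .
qed

end

theorem proposition5p1:
  fixes n :: nat
    and a :: "'d::finite \<Rightarrow> nat \<Rightarrow> real"
    and \<tau> :: "'d \<Rightarrow> nat \<Rightarrow> nat" and l :: "'d \<Rightarrow> nat"
    and X :: "(real^'m::finite) set"
    and f :: "real^'m \<Rightarrow> real^'d"
    and \<phi> :: "real^'d \<Rightarrow> real"
    and u :: "real^'m \<Rightarrow> 'd \<Rightarrow> nat \<Rightarrow> real"
    and W :: "((real^'m) \<times> (real^'d)) set"
    and xb :: "real^'m" and fb :: "real^'d" and tb :: "'d \<Rightarrow> nat"
  assumes n_pos: "1 \<le> n"
    and a_mono: "\<forall>i j. j < n \<longrightarrow> a i j < a i (Suc j)"
    and tau0: "\<forall>i. \<tau> i 0 = 0" and taul: "\<forall>i. \<tau> i (l i) = n"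
    and tau_mono: "\<forall>i t. t < l i \<longrightarrow> \<tau> i t < \<tau> i (Suc t)"
    and f_bnd: "\<forall>x\<in>X. \<forall>i. a i 0 \<le> f x $ i \<and> f x $ i \<le> a i n"
    and u_cvx: "\<forall>i j. j \<le> n \<longrightarrow> convex_on X (\<lambda>x. u x i j)"
    and u0: "\<forall>x\<in>X. \<forall>i. u x i 0 = a i 0"
    and un: "\<forall>x\<in>X. \<forall>i. u x i n = f x $ i"
    and umid: "\<forall>x\<in>X. \<forall>i. \<forall>j\<in>{1..n-1}. u x i j \<le> min (f x $ i) (a i j)"
    and W_cvx: "convex W"
    and W_graph: "{(x, f x) | x. x \<in> X} \<subseteq> W"
    and xb_X: "xb \<in> X"
    and in_W: "(xb, fb) \<in> W"
    and tb_rng: "\<forall>i. 1 \<le> tb i \<and> tb i \<le> l i"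
    and fb_H: "\<forall>i. a i (\<tau> i (tb i - 1)) \<le> fb $ i \<and> fb $ i \<le> a i (\<tau> i (tb i))"
  defines "ubar \<equiv> (\<lambda>i j. if j = n then ereal (fb $ i) else ereal (u xb i j))"
    and "uhat \<equiv> (\<lambda>i j. if j \<le> \<tau> i (tb i - 1) then ereal (a i j)
                        else if \<tau> i (tb i) \<le> j then ereal (fb $ i) else -\<infinity>)"
  shows "varphi a n \<phi> u W xb fb = concQ a n \<phi> (env_mat a n ubar)
       \<and> varphi_Hm a n \<tau> l \<phi> W xb fb = concQ a n \<phi> (env_mat a n uhat)
       \<and> varphi_H a n \<tau> l \<phi> u W xb fb
           = concQ a n \<phi> (env_mat a n (\<lambda>i j. max (ubar i j) (uhat i j)))"
proof -
  have a: "\<And>i. strict_mono_on {..n} (a i)" using a_mono by (simp add: strict_mono_on_atMost_SucI)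
  have \<tau>: "\<And>i. strict_mono_on {..l i} (\<tau> i)" using tau_mono by (simp add: strict_mono_on_atMost_SucI)
  note \<tau>_facts = \<tau> tau0[rule_format] taul[rule_format] tb_rng[rule_format]
  have n: "0 < n" using n_pos by simp
  have ubar: "ubar i 0 = ereal (a i 0)" "ubar i n = ereal (fb $ i)" "ubar i j \<noteq> \<infinity>" for i j
    using n u0 xb_X by (simp_all add: ubar_def)
  have uhat: "uhat = breakpoint_minorant a \<tau> tb (\<lambda>i. fb $ i)"
    unfolding uhat_def breakpoint_minorant_def ..
  have uhat_ends: "uhat i 0 = ereal (a i 0)" "uhat i n = ereal (fb $ i)" "uhat i j \<noteq> \<infinity>" for i j
    unfolding uhat using breakpoint_minorant_0 breakpoint_minorant_not_PInfty
      breakpoint_minorant_n[where \<tau> = \<tau> and l = l and r = tb, OF \<tau>_facts] by simp_all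
  have P1: "(is_mat n s \<and> (\<forall>i. s i n = fb $ i) \<and> (\<forall>i j. j < n \<longrightarrow> u xb i j \<le> s i j) \<and> (xb, fb) \<in> W)
      \<longleftrightarrow> (\<forall>i. s i n = fb $ i) \<and> (\<forall>i j. j \<le> n \<longrightarrow> ubar i j \<le> ereal (s i j))" if "s \<in> Qset a n" for s
    using Qset_is_mat[OF a that] in_W by (auto simp: ubar_def le_less)
  have P2: "(is_mat n s \<and> (\<forall>i. s i n = fb $ i) \<and> (\<exists>\<delta>. Inc1 \<tau> l n (Zmap a s) \<delta>) \<and> (xb, fb) \<in> W)
      \<longleftrightarrow> (\<forall>i. s i n = fb $ i) \<and> (\<forall>i j. j \<le> n \<longrightarrow> uhat i j \<le> ereal (s i j))" if "s \<in> Qset a n" for s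
    using Qset_is_mat[OF a that] in_W unfolding uhat
    by (metis Inc1_iff_above_breakpoint_minorant[where \<tau> = \<tau> and l = l and r = tb, OF \<tau>_facts a fb_H[rule_format] that])
  have P3: "(is_mat n s \<and> (\<forall>i. s i n = fb $ i) \<and> (\<exists>\<delta>. Inc1 \<tau> l n (Zmap a s) \<delta>)
        \<and> (\<forall>i j. j < n \<longrightarrow> u xb i j \<le> s i j) \<and> (xb, fb) \<in> W)
      \<longleftrightarrow> (\<forall>i. s i n = fb $ i) \<and> (\<forall>i j. j \<le> n \<longrightarrow> max (ubar i j) (uhat i j) \<le> ereal (s i j))"
    if "s \<in> Qset a n" for s
    using P1[OF that] P2[OF that] by auto
  show ?thesis
  proof (intro conjI)
    show "varphi a n \<phi> u W xb fb = concQ a n \<phi> (env_mat a n ubar)"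
      unfolding varphi_def by (rule Sup_concQ_eq_env_mat[OF a n ubar(3) ubar(1,2) P1])
    show "varphi_Hm a n \<tau> l \<phi> W xb fb = concQ a n \<phi> (env_mat a n uhat)"
      unfolding varphi_Hm_def by (rule Sup_concQ_eq_env_mat[OF a n uhat_ends(3) uhat_ends(1,2) P2])
    show "varphi_H a n \<tau> l \<phi> u W xb fb = concQ a n \<phi> (env_mat a n (\<lambda>i j. max (ubar i j) (uhat i j)))"
      unfolding varphi_H_def
      by (rule Sup_concQ_eq_env_mat[OF a n _ _ _ P3]) (simp_all add: ubar uhat_ends max_def)
  qed
qed

end
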